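(* Let $Q$ be an irreducible transition matrix on a finite set $\Sigma\subset\mathbb{R}$ with invariant distribution $\mu$, let $\gamma\in(0,1)$, and for each $N$ let $\mathbb{P}^{(N)}$ be the law of the Markov chain $\omega=(\omega_n)_{n\ge0}$ on $\Sigma$ with transition matrix $Q^{(N)}=\mathrm{Id}+N^{-\gamma}(Q-\mathrm{Id})$ started from $\mu$ (which is invariant for $Q^{(N)}$). Then for all $\beta\ge0$, $h\in\mathbb{R}$, $$\mathbb{E}^{(N)}\Big[\frac1N\log Z_{N,\beta,h,\omega}\Big]\xrightarrow[N\to\infty]{}\sum_{x\in\Sigma}\mu(x)F(h+\beta x).$$
   Context: $\tau$ is a renewal process with $\tau_0=0$ and interarrival law $K(n)=L(n)n^{-(1+\alpha)}$, $n\ge1$, with $\alpha\ge0$, $L$ positive slowly varying, $\sum_nK(n)=1$; $\delta_n=\mathbf 1_{\{n\in\tau\}}$; $E$ is expectation over $\tau$, and $\omega$ is independent of $\tau$. $Z_{N,\beta,h,\omega}=E\big[\exp\big(\sum_{n=1}^N(\beta\omega_n+h)\delta_n\big)\delta_N\big]$. $F(h):=\lim_{N}\frac1N\log E[\exp(h\sum_{n=1}^N\delta_n)\delta_N]$ is the homogeneous free energy (nonnegative, zero iff $h\le0$). $\mathbb{E}^{(N)}$ is expectation under $\mathbb{P}^{(N)}$. *)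

theory Defs
  imports "HOL-Analysis.Analysis"
begin

definition slowly_varying :: "(real \<Rightarrow> real) \<Rightarrow> bool" where
  "slowly_varying L \<longleftrightarrow> L \<in> borel_measurable borel \<and> (\<forall>x>0. L x > 0) \<and>
     (\<forall>a>0. ((\<lambda>x. L (a * x) / L x) \<longlongrightarrow> 1) at_top)"

text \<open>Renewal probability P(tau \<inter> [1,N] = S) * (indicator N in S) for a renewal process started
  at 0 with interarrival law K: product of K over consecutive gaps of {0} \<union> S.\<close>
definition renewal_weight :: "(nat \<Rightarrow> real) \<Rightarrow> nat set \<Rightarrow> real" where
  "renewal_weight K S = (\<Prod>s\<in>S. K (s - Max {t \<in> insert 0 S. t < s}))"

text \<open>Z_{N,beta,h,omega} = E[exp(sum_{n=1}^N (beta omega_n + h) delta_n) delta_N], expectation over tau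
  written as the sum over the possible sets tau \<inter> {1..N} containing N.\<close>
definition Zpart :: "(nat \<Rightarrow> real) \<Rightarrow> real \<Rightarrow> real \<Rightarrow> (nat \<Rightarrow> real) \<Rightarrow> nat \<Rightarrow> real" where
  "Zpart K \<beta> h \<omega> N =
     (if N = 0 then 1 else
      (\<Sum>S\<in>{S \<in> Pow {1..N}. N \<in> S}. renewal_weight K S * exp (\<Sum>n\<in>S. \<beta> * \<omega> n + h)))"

definition hom_F :: "(nat \<Rightarrow> real) \<Rightarrow> real \<Rightarrow> real" where
  "hom_F K h = lim (\<lambda>N. ln (Zpart K 0 h (\<lambda>_. 0) N) / real N)"

fun matpow :: "real set \<Rightarrow> (real \<Rightarrow> real \<Rightarrow> real) \<Rightarrow> nat \<Rightarrow> real \<Rightarrow> real \<Rightarrow> real" where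
  "matpow \<Sigma> Q 0 x y = (if x = y then 1 else 0)"
| "matpow \<Sigma> Q (Suc n) x y = (\<Sum>z\<in>\<Sigma>. matpow \<Sigma> Q n x z * Q z y)"

definition stochastic_matrix :: "real set \<Rightarrow> (real \<Rightarrow> real \<Rightarrow> real) \<Rightarrow> bool" where
  "stochastic_matrix \<Sigma> Q \<longleftrightarrow> (\<forall>x\<in>\<Sigma>. \<forall>y\<in>\<Sigma>. Q x y \<ge> 0) \<and> (\<forall>x\<in>\<Sigma>. (\<Sum>y\<in>\<Sigma>. Q x y) = 1)"

definition irreducible_matrix :: "real set \<Rightarrow> (real \<Rightarrow> real \<Rightarrow> real) \<Rightarrow> bool" where
  "irreducible_matrix \<Sigma> Q \<longleftrightarrow> (\<forall>x\<in>\<Sigma>. \<forall>y\<in>\<Sigma>. \<exists>n. matpow \<Sigma> Q n x y > 0)"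

definition invariant_distribution :: "real set \<Rightarrow> (real \<Rightarrow> real \<Rightarrow> real) \<Rightarrow> (real \<Rightarrow> real) \<Rightarrow> bool" where
  "invariant_distribution \<Sigma> Q \<mu> \<longleftrightarrow> (\<forall>x\<in>\<Sigma>. \<mu> x \<ge> 0) \<and> (\<Sum>x\<in>\<Sigma>. \<mu> x) = 1 \<and>
     (\<forall>y\<in>\<Sigma>. (\<Sum>x\<in>\<Sigma>. \<mu> x * Q x y) = \<mu> y)"

definition QN :: "(real \<Rightarrow> real \<Rightarrow> real) \<Rightarrow> real \<Rightarrow> nat \<Rightarrow> real \<Rightarrow> real \<Rightarrow> real" where
  "QN Q \<gamma> N x y = (if x = y then 1 else 0) + real N powr (-\<gamma>) * (Q x y - (if x = y then 1 else 0))"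

definition markov_expect :: "real set \<Rightarrow> (real \<Rightarrow> real) \<Rightarrow> (real \<Rightarrow> real \<Rightarrow> real) \<Rightarrow> nat
    \<Rightarrow> ((nat \<Rightarrow> real) \<Rightarrow> real) \<Rightarrow> real" where
  "markov_expect \<Sigma> \<mu> P N f =
     (\<Sum>\<omega>\<in>PiE {0..N} (\<lambda>_. \<Sigma>). \<mu> (\<omega> 0) * (\<Prod>i\<in>{1..N}. P (\<omega> (i - 1)) (\<omega> i)) * f \<omega>)"

end

theory Submission
  imports Defs
begin

text \<open>
  Write v(n) = \<beta> \<omega>(n) + h. Decomposing at the last renewal before N gives the recursion
  Z(N) = e^v(N) \<Sum>_{m<N} Z(m) K(N - m). Under the chain with matrix Id + N^-\<gamma> (Q - Id) the
  environment moves at a given step with probability at most N^-\<gamma>, so for large N it is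
  constant on long stretches.

  Upper bound: since \<Sum>_g K(g) e^(c - F(c) g) \<le> 1, induction on the recursion gives
  Z(c) \<le> exp(\<Sum>_{n\<le>c} F(v(n))) \<Prod>_{n\<le>c} (1 + x(n)), where x(n) is controlled by the number of
  changes of v among the D steps before n and by the tail of K beyond D. This uses F \<ge> 0,
  which holds because K decays subexponentially.

  Lower bound: cutting [1, N] into blocks of length l, supermultiplicativity gives
  log Z(N) \<ge> \<Sum>_blocks log z_l(v at the block start) minus a penalty for every block in which v
  changes, where z_l is the homogeneous partition function on l sites.

  Taking expectations, stationarity of \<mu> turns both bounds into \<Sum>_x \<mu>(x) F(h + \<beta> x) up to
  errors that vanish as N \<rightarrow> \<infinity> and then D, l \<rightarrow> \<infinity>.
\<close>

section \<open>The renewal recursion\<close>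

text \<open>\<open>renewal_pf K v a k\<close> is the partition function of the window \<open>{a+1..a+k}\<close>, pinned at
  both ends, with potential \<open>v\<close>.\<close>
fun renewal_pf :: "(nat \<Rightarrow> real) \<Rightarrow> (nat \<Rightarrow> real) \<Rightarrow> nat \<Rightarrow> nat \<Rightarrow> real" where
  "renewal_pf K v a k =
     (if k = 0 then 1 else exp (v (a+k)) * (\<Sum>j<k. renewal_pf K v a j * K (k - j)))"
declare renewal_pf.simps[simp del]

definition pinned_sets :: "nat \<Rightarrow> nat set set" where
  "pinned_sets m = (if m = 0 then {{}} else {S \<in> Pow {1..m}. m \<in> S})"

definition renewal_sum :: "(nat \<Rightarrow> real) \<Rightarrow> (nat \<Rightarrow> real) \<Rightarrow> nat \<Rightarrow> real" where
  "renewal_sum K v N = (\<Sum>S\<in>pinned_sets N. renewal_weight K S * exp (\<Sum>n\<in>S. v n))"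

lemma pinned_sets_subset: "S \<in> pinned_sets m \<Longrightarrow> S \<subseteq> {1..m}"
  by (auto simp: pinned_sets_def split: if_splits)

lemma Max_insert_0_pinned_sets: "S \<in> pinned_sets m \<Longrightarrow> Max (insert 0 S) = m"
proof (cases "m = 0")
  case False
  assume "S \<in> pinned_sets m"
  then have "S \<subseteq> {1..m}" "m \<in> S" using False by (auto simp: pinned_sets_def)
  moreover have "finite S" using \<open>S \<subseteq> {1..m}\<close> finite_subset by blast
  ultimately show ?thesis by (intro Max_eqI) auto
qed (simp add: pinned_sets_def)

lemma finite_pinned_sets: "finite (pinned_sets m)"
  by (simp add: pinned_sets_def)

lemma insert_pinned_sets_inj:
  assumes "S \<in> pinned_sets m" "S' \<in> pinned_sets m'" "m < N" "m' < N"
    and "insert N S = insert N S'"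
  shows "S = S'" "m = m'"
proof -
  have "N \<notin> S" "N \<notin> S'"
    using pinned_sets_subset[OF assms(1)] pinned_sets_subset[OF assms(2)] assms(3,4) by auto
  then show "S = S'" using assms(5) by (metis insert_ident)
  then show "m = m'" using Max_insert_0_pinned_sets[OF assms(1)] Max_insert_0_pinned_sets[OF assms(2)]
    by simp
qed

lemma pinned_sets_eq_UN:
  assumes "N \<ge> 1"
  shows "pinned_sets N = (\<Union>m<N. insert N ` pinned_sets m)"
proof
  show "pinned_sets N \<subseteq> (\<Union>m<N. insert N ` pinned_sets m)"
  proof
    fix T assume "T \<in> pinned_sets N"
    then have T: "T \<subseteq> {1..N}" "N \<in> T" using assms by (auto simp: pinned_sets_def)
    define S where "S = T - {N}"
    have "finite S" "S \<subseteq> {1..N}" "T = insert N S" using T S_def finite_subset by auto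
    show "T \<in> (\<Union>m<N. insert N ` pinned_sets m)"
    proof (cases "S = {}")
      case True
      then show ?thesis using \<open>T = insert N S\<close> assms by (force simp: pinned_sets_def)
    next
      case False
      define m where "m = Max S"
      have "m \<in> S" "\<And>x. x \<in> S \<Longrightarrow> x \<le> m" using False \<open>finite S\<close> unfolding m_def by auto
      then have "S \<in> pinned_sets m" "m < N"
        using \<open>S \<subseteq> {1..N}\<close> S_def by (auto simp: pinned_sets_def subset_iff)
      then show ?thesis using \<open>T = insert N S\<close> by blast
    qed
  qed
  show "(\<Union>m<N. insert N ` pinned_sets m) \<subseteq> pinned_sets N"
  proof clarify
    fix m S assume "m < N" "S \<in> pinned_sets m"
    then show "insert N S \<in> pinned_sets N"
      using assms pinned_sets_subset[of S m] by (auto simp: pinned_sets_def)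
  qed
qed

lemma renewal_weight_insert:
  assumes S: "S \<in> pinned_sets m" and "m < N"
  shows "renewal_weight K (insert N S) = K (N - m) * renewal_weight K S"
proof -
  have Ssub: "S \<subseteq> {1..m}" using pinned_sets_subset[OF S] .
  then have "finite S" "N \<notin> S" using \<open>m < N\<close> finite_subset by auto
  have last: "{t \<in> insert 0 (insert N S). t < N} = insert 0 S" using Ssub \<open>m < N\<close> by auto
  have others: "\<And>s. s \<in> S \<Longrightarrow> {t \<in> insert 0 (insert N S). t < s} = {t \<in> insert 0 S. t < s}"
    using Ssub \<open>m < N\<close> by auto
  have "renewal_weight K (insert N S) =
      K (N - Max {t \<in> insert 0 (insert N S). t < N}) *
      (\<Prod>s\<in>S. K (s - Max {t \<in> insert 0 (insert N S). t < s}))"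
    unfolding renewal_weight_def using \<open>finite S\<close> \<open>N \<notin> S\<close> by simp
  also have "\<dots> = K (N - m) * renewal_weight K S"
    unfolding renewal_weight_def last Max_insert_0_pinned_sets[OF S] using others
    by (simp cong: prod.cong)
  finally show ?thesis .
qed

lemma renewal_sum_rec:
  assumes "N \<ge> 1"
  shows "renewal_sum K v N = exp (v N) * (\<Sum>m<N. renewal_sum K v m * K (N - m))"
proof -
  let ?f = "\<lambda>T. renewal_weight K T * exp (\<Sum>n\<in>T. v n)"
  have "renewal_sum K v N = (\<Sum>m<N. \<Sum>T\<in>insert N ` pinned_sets m. ?f T)"
    unfolding renewal_sum_def pinned_sets_eq_UN[OF assms]
  proof (rule sum.UNION_disjoint)
    show "\<forall>i\<in>{..<N}. \<forall>j\<in>{..<N}. i \<noteq> j \<longrightarrow> insert N ` pinned_sets i \<inter> insert N ` pinned_sets j = {}"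
      using insert_pinned_sets_inj(2) by blast
  qed (simp_all add: finite_pinned_sets)
  also have "\<dots> = (\<Sum>m<N. \<Sum>S\<in>pinned_sets m. ?f (insert N S))"
  proof (rule sum.cong[OF refl])
    fix m assume "m \<in> {..<N}"
    then have "inj_on (insert N) (pinned_sets m)"
      using insert_pinned_sets_inj(1)[of _ m _ m N] by (intro inj_onI) auto
    then show "(\<Sum>T\<in>insert N ` pinned_sets m. ?f T) = (\<Sum>S\<in>pinned_sets m. ?f (insert N S))"
      by (simp add: sum.reindex)
  qed
  also have "\<dots> = (\<Sum>m<N. \<Sum>S\<in>pinned_sets m. exp (v N) * ?f S * K (N - m))"
  proof (intro sum.cong refl)
    fix m S assume m: "m \<in> {..<N}" and S: "S \<in> pinned_sets m"
    have "finite S" "N \<notin> S" using pinned_sets_subset[OF S] m finite_subset by auto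
    then show "?f (insert N S) = exp (v N) * ?f S * K (N - m)"
      using renewal_weight_insert[OF S] m by (simp add: exp_add)
  qed
  also have "\<dots> = exp (v N) * (\<Sum>m<N. renewal_sum K v m * K (N - m))"
    unfolding renewal_sum_def by (simp add: sum_distrib_left sum_distrib_right mult.assoc)
  finally show ?thesis .
qed

lemma renewal_sum_eq_renewal_pf: "renewal_sum K v N = renewal_pf K v 0 N"
proof (induction N rule: less_induct)
  case (less N)
  show ?case
  proof (cases "N = 0")
    case True
    then show ?thesis
      by (simp add: renewal_sum_def pinned_sets_def renewal_weight_def renewal_pf.simps)
  next
    case False
    then show ?thesis
      using renewal_sum_rec[of N K v] less by (simp add: renewal_pf.simps[of K v 0 N])
  qed
qed

lemma Zpart_eq_renewal_pf: "Zpart K \<beta> h \<omega> N = renewal_pf K (\<lambda>n. \<beta> * \<omega> n + h) 0 N"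
  by (simp add: Zpart_def renewal_sum_def pinned_sets_def renewal_weight_def
      flip: renewal_sum_eq_renewal_pf)

lemma renewal_pf_nonneg:
  assumes "\<And>n. K n \<ge> 0"
  shows "renewal_pf K v a k \<ge> 0"
proof (induction k rule: less_induct)
  case (less k)
  show ?case
    using less assms by (subst renewal_pf.simps) (auto intro!: sum_nonneg mult_nonneg_nonneg)
qed

lemma renewal_pf_ge_single:
  assumes "\<And>n. K n \<ge> 0" and "k \<ge> 1"
  shows "renewal_pf K v a k \<ge> exp (v (a+k)) * K k"
proof -
  have "exp (v (a+k)) * K k = exp (v (a+k)) * (renewal_pf K v a 0 * K (k - 0))"
    by (simp add: renewal_pf.simps)
  also have "\<dots> \<le> exp (v (a+k)) * (\<Sum>j<k. renewal_pf K v a j * K (k - j))"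
    using assms renewal_pf_nonneg[OF assms(1)]
    by (intro mult_left_mono member_le_sum[where f="\<lambda>j. renewal_pf K v a j * K (k - j)"]) auto
  also have "\<dots> = renewal_pf K v a k" using assms(2) by (subst (2) renewal_pf.simps) simp
  finally show ?thesis .
qed

lemma renewal_pf_ge_prod:
  assumes "\<And>n. K n \<ge> 0"
  shows "renewal_pf K v a k \<ge> (\<Prod>i\<in>{1..k}. K 1 * exp (v (a+i)))"
proof (induction k)
  case 0
  then show ?case by (simp add: renewal_pf.simps)
next
  case (Suc k)
  have "(\<Prod>i\<in>{1..Suc k}. K 1 * exp (v (a+i))) =
      (\<Prod>i\<in>{1..k}. K 1 * exp (v (a+i))) * (K 1 * exp (v (a + Suc k)))"
    by (simp add: prod.nat_ivl_Suc')
  also have "\<dots> \<le> renewal_pf K v a k * (K 1 * exp (v (a + Suc k)))"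
    using Suc assms by (intro mult_right_mono) auto
  also have "\<dots> = exp (v (a + Suc k)) * (renewal_pf K v a k * K (Suc k - k))"
    by simp
  also have "\<dots> \<le> exp (v (a + Suc k)) * (\<Sum>j<Suc k. renewal_pf K v a j * K (Suc k - j))"
    using assms renewal_pf_nonneg[OF assms]
    by (intro mult_left_mono member_le_sum[where f="\<lambda>j. renewal_pf K v a j * K (Suc k - j)"]) auto
  also have "\<dots> = renewal_pf K v a (Suc k)"
    by (subst (2) renewal_pf.simps) simp
  finally show ?case .
qed

lemma renewal_pf_cong:
  assumes "\<And>i. 1 \<le> i \<Longrightarrow> i \<le> k \<Longrightarrow> v (a+i) = v' (a'+i)"
  shows "renewal_pf K v a k = renewal_pf K v' a' k"
  using assms
proof (induction k rule: less_induct)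
  case (less k)
  show ?case
  proof (cases "k = 0")
    case False
    have "(\<Sum>j<k. renewal_pf K v a j * K (k - j)) = (\<Sum>j<k. renewal_pf K v' a' j * K (k - j))"
      using less.IH less.prems by (intro sum.cong refl) auto
    moreover have "v (a+k) = v' (a'+k)" using less.prems False by simp
    ultimately show ?thesis
      using False by (simp add: renewal_pf.simps[of K v a k] renewal_pf.simps[of K v' a' k])
  qed (simp add: renewal_pf.simps)
qed

lemma renewal_pf_supermult:
  assumes K_nonneg: "\<And>n. K n \<ge> 0"
  shows "renewal_pf K v a (m+k) \<ge> renewal_pf K v a m * renewal_pf K v (a+m) k"
proof (induction k rule: less_induct)
  case (less k)
  show ?case
  proof (cases "k = 0")
    case False
    have "renewal_pf K v a m * renewal_pf K v (a+m) k =
        exp (v (a+m+k)) * (\<Sum>j<k. renewal_pf K v a m * renewal_pf K v (a+m) j * K (k - j))"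
      using False by (simp add: renewal_pf.simps[of K v "a+m" k] sum_distrib_left mult_ac)
    also have "\<dots> \<le> exp (v (a+m+k)) * (\<Sum>j<k. renewal_pf K v a (m+j) * K (m + k - (m+j)))"
      using less.IH K_nonneg by (intro mult_left_mono sum_mono) (auto intro: mult_right_mono)
    also have "(\<Sum>j<k. renewal_pf K v a (m+j) * K (m + k - (m+j))) =
        (\<Sum>j\<in>(\<lambda>j. m+j) ` {..<k}. renewal_pf K v a j * K (m + k - j))"
      by (simp add: sum.reindex)
    also have "\<dots> \<le> (\<Sum>j<m+k. renewal_pf K v a j * K (m + k - j))"
      using K_nonneg renewal_pf_nonneg[OF K_nonneg] by (intro sum_mono2) auto
    also have "exp (v (a+m+k)) * \<dots> = renewal_pf K v a (m+k)"
      using False by (simp add: renewal_pf.simps[of K v a "m+k"] add.assoc)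
    finally show ?thesis by simp
  qed (simp add: renewal_pf.simps)
qed

lemma sum_lessThan_reflect: "(\<Sum>j<n. f (n - j)) = (\<Sum>g\<in>{1..n}. f g)" for n :: nat
  by (rule sum.reindex_bij_witness[where i="\<lambda>g. n - g" and j="\<lambda>j. n - j"]) auto

section \<open>Fekete's lemma\<close>

lemma superadditive_ratio_lower:
  fixes a :: "nat \<Rightarrow> real"
  assumes sup: "\<And>m k. a (m+k) \<ge> a m + a k" and "m \<ge> 1"
  obtains E where "\<And>n. n \<ge> 1 \<Longrightarrow> a n / n \<ge> a m / m - E / n"
proof -
  define c where "c = Min (a ` {..<m})"
  have multiples: "a (q*m + j) \<ge> q * a m + a j" for q j
  proof (induction q)
    case (Suc q)
    have "a (Suc q * m + j) = a (m + (q*m+j))" by (simp add: algebra_simps)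
    also have "\<dots> \<ge> a m + a (q*m+j)" by (rule sup)
    finally show ?case using Suc by (simp add: algebra_simps)
  qed simp
  have multiple: "a n \<ge> (n div m) * a m + c" for n
  proof -
    have "c \<le> a (n mod m)" unfolding c_def using \<open>m \<ge> 1\<close> by (intro Min_le) auto
    then show ?thesis using multiples[of "n div m" "n mod m"] by simp
  qed
  have "a n / n \<ge> a m / m - (\<bar>a m\<bar> + \<bar>c\<bar>) / n" if "n \<ge> 1" for n
  proof -
    have split: "(n/m) * a m = (n div m) * a m + ((n mod m)/m) * a m"
      by (simp only: of_nat_of_nat_div_aux[of n m] distrib_right)
    have "0 \<le> real (n mod m) / m" "real (n mod m) / m \<le> 1"
      using \<open>m \<ge> 1\<close> mod_less_divisor[of m n] by auto
    then have "((n mod m)/m) * a m \<le> \<bar>a m\<bar>"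
      by (metis abs_ge_self mult_left_le_one_le abs_ge_zero order_trans mult_left_mono)
    then have "a n \<ge> (n/m) * a m - (\<bar>a m\<bar> + \<bar>c\<bar>)"
      using multiple[of n] split abs_ge_minus_self[of c] by linarith
    then have "((n/m) * a m - (\<bar>a m\<bar> + \<bar>c\<bar>)) / n \<le> a n / n" by (intro divide_right_mono) auto
    moreover have "((n/m) * a m - (\<bar>a m\<bar> + \<bar>c\<bar>)) / n = a m / m - (\<bar>a m\<bar> + \<bar>c\<bar>) / n"
      using that by (simp add: field_simps)
    ultimately show ?thesis by simp
  qed
  then show ?thesis using that by blast
qed

lemma fekete_superadditive:
  fixes a :: "nat \<Rightarrow> real"
  assumes sup: "\<And>m k. a (m+k) \<ge> a m + a k" and bd: "\<And>n. a n \<le> B * real n"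
  shows "(\<lambda>n. a n / n) \<longlonglongrightarrow> (SUP n\<in>{1..}. a n / n)"
    and "\<And>n. n \<ge> 1 \<Longrightarrow> a n / n \<le> (SUP n\<in>{1..}. a n / n)"
proof -
  define s where "s = (SUP n\<in>{1..}. a n / n)"
  have bdd: "bdd_above ((\<lambda>n. a n / n) ` {1..})"
    by (rule bdd_aboveI2[where M=B]) (use bd in \<open>auto simp: divide_le_eq mult.commute\<close>)
  show up: "\<And>n. n \<ge> 1 \<Longrightarrow> a n / n \<le> (SUP n\<in>{1..}. a n / n)"
    using bdd by (intro cSUP_upper) auto
  show "(\<lambda>n. a n / n) \<longlonglongrightarrow> (SUP n\<in>{1..}. a n / n)"
    unfolding s_def[symmetric]
  proof (rule LIMSEQ_I)
    fix r :: real assume "r > 0"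
    then have "s - r/2 < s" by simp
    then have "\<exists>m\<in>{1..}. s - r/2 < a m / m"
      unfolding s_def by (subst (asm) less_cSUP_iff[OF _ bdd]) auto
    then obtain m where "m \<ge> 1" and m: "s - r/2 < a m / m" by auto
    obtain E where E: "\<And>n. n \<ge> 1 \<Longrightarrow> a n / n \<ge> a m / m - E / n"
      using superadditive_ratio_lower[OF sup \<open>m \<ge> 1\<close>] by blast
    obtain n0 :: nat where n0: "2 * E / r < n0" using reals_Archimedean2 by blast
    have "norm (a n / n - s) < r" if "n \<ge> max n0 1" for n
    proof -
      have "2 * E / r < n" using n0 that by (meson less_le_trans max.bounded_iff of_nat_le_iff)
      then have "2 * E < r * n" using \<open>r > 0\<close> by (simp add: divide_less_eq mult.commute)
      then have "E / n < r / 2" using that by (simp add: field_simps)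
      then have "a n / n > s - r" using E[of n] m that by fastforce
      moreover have "a n / n \<le> s" unfolding s_def using up that by simp
      ultimately show ?thesis by simp
    qed
    then show "\<exists>no. \<forall>n\<ge>no. norm (a n / n - s) < r" by blast
  qed
qed

section \<open>The homogeneous partition function\<close>

definition hom_pf :: "(nat \<Rightarrow> real) \<Rightarrow> real \<Rightarrow> nat \<Rightarrow> real" where
  "hom_pf K c n = renewal_pf K (\<lambda>_. c) 0 n"

locale renewal_kernel =
  fixes K :: "nat \<Rightarrow> real"
  assumes K_nonneg: "\<And>n. K n \<ge> 0" and K_1_pos: "K 1 > 0"
    and K_partial_sum_le_1: "\<And>n. (\<Sum>g\<in>{1..n}. K g) \<le> 1"
begin

lemma renewal_pf_pos: "renewal_pf K v a k > 0"
proof -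
  have "(\<Prod>i\<in>{1..k}. K 1 * exp (v (a+i))) > 0" using K_1_pos by (intro prod_pos) auto
  then show ?thesis using renewal_pf_ge_prod[where K=K, OF K_nonneg, of v a k] by linarith
qed

lemma hom_pf_pos: "hom_pf K c n > 0"
  unfolding hom_pf_def by (rule renewal_pf_pos)

lemma hom_pf_rec:
  assumes "n \<ge> 1"
  shows "hom_pf K c n = exp c * (\<Sum>g\<in>{1..n}. hom_pf K c (n - g) * K g)"
proof -
  have "hom_pf K c n = exp c * (\<Sum>j<n. hom_pf K c j * K (n - j))"
    unfolding hom_pf_def using assms by (subst renewal_pf.simps) simp
  also have "(\<Sum>j<n. hom_pf K c j * K (n - j)) = (\<Sum>j<n. (\<lambda>g. hom_pf K c (n - g) * K g) (n - j))"
    by (intro sum.cong refl) (simp add: diff_diff_cancel less_imp_le)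
  also have "\<dots> = (\<Sum>g\<in>{1..n}. hom_pf K c (n - g) * K g)" by (rule sum_lessThan_reflect)
  finally show ?thesis .
qed

lemma hom_pf_le_exp: "hom_pf K c n \<le> exp (\<bar>c\<bar> * n)"
proof (induction n rule: less_induct)
  case (less n)
  show ?case
  proof (cases "n = 0")
    case True then show ?thesis by (simp add: hom_pf_def renewal_pf.simps)
  next
    case False
    then have "n \<ge> 1" by simp
    have term_le: "hom_pf K c (n - g) * K g \<le> exp (\<bar>c\<bar> * (n - 1)) * K g" if "g \<in> {1..n}" for g
    proof -
      have "hom_pf K c (n - g) \<le> exp (\<bar>c\<bar> * real (n - g))" using less.IH[of "n - g"] that by simp
      also have "\<dots> \<le> exp (\<bar>c\<bar> * (n - 1))"
        using that by (intro exp_mono mult_left_mono) (auto simp: of_nat_diff)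
      finally show ?thesis using K_nonneg[of g] by (intro mult_right_mono)
    qed
    then have "(\<Sum>g\<in>{1..n}. hom_pf K c (n - g) * K g) \<le> exp (\<bar>c\<bar> * (n - 1)) * (\<Sum>g\<in>{1..n}. K g)"
      unfolding sum_distrib_left by (intro sum_mono term_le)
    also have "\<dots> \<le> exp (\<bar>c\<bar> * (n - 1))"
      using K_partial_sum_le_1[of n] by (simp add: mult_left_le)
    finally have "hom_pf K c n \<le> exp \<bar>c\<bar> * exp (\<bar>c\<bar> * (n - 1))"
      unfolding hom_pf_rec[OF \<open>n \<ge> 1\<close>]
      by (intro mult_mono) (auto intro!: sum_nonneg mult_nonneg_nonneg K_nonneg less_imp_le[OF hom_pf_pos])
    also have "\<dots> = exp (\<bar>c\<bar> * n)"
      using \<open>n \<ge> 1\<close> by (simp add: exp_add[symmetric] algebra_simps of_nat_diff)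
    finally show ?thesis .
  qed
qed

lemma hom_pf_supermult: "hom_pf K c (m+k) \<ge> hom_pf K c m * hom_pf K c k"
proof -
  have "renewal_pf K (\<lambda>_. c) m k = renewal_pf K (\<lambda>_. c) 0 k" by (rule renewal_pf_cong) simp
  then show ?thesis
    using renewal_pf_supermult[where K=K, OF K_nonneg, of "\<lambda>_. c" 0 m k] unfolding hom_pf_def by simp
qed

lemma ln_hom_pf_superadditive:
  "ln (hom_pf K c (m+k)) \<ge> ln (hom_pf K c m) + ln (hom_pf K c k)"
proof -
  have "ln (hom_pf K c m * hom_pf K c k) \<le> ln (hom_pf K c (m+k))"
    using hom_pf_supermult hom_pf_pos by (intro ln_mono) (auto intro: mult_pos_pos)
  then show ?thesis using hom_pf_pos by (simp add: ln_mult_pos)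
qed

lemma ln_hom_pf_le_linear: "ln (hom_pf K c n) \<le> \<bar>c\<bar> * n"
  using ln_mono[OF hom_pf_le_exp hom_pf_pos] by simp

lemma hom_F_eq_SUP: "hom_F K c = (SUP n\<in>{1..}. ln (hom_pf K c n) / n)"
  and ln_hom_pf_tendsto: "(\<lambda>n. ln (hom_pf K c n) / n) \<longlonglongrightarrow> hom_F K c"
proof -
  note lim = fekete_superadditive(1)[OF ln_hom_pf_superadditive ln_hom_pf_le_linear]
  have "hom_F K c = lim (\<lambda>n. ln (hom_pf K c n) / n)"
    unfolding hom_F_def hom_pf_def using Zpart_eq_renewal_pf[of K 0 c "\<lambda>_. 0"] by simp
  then show "hom_F K c = (SUP n\<in>{1..}. ln (hom_pf K c n) / n)" using lim by (simp add: limI)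
  then show "(\<lambda>n. ln (hom_pf K c n) / n) \<longlonglongrightarrow> hom_F K c" using lim by simp
qed

lemma ln_hom_pf_le: "ln (hom_pf K c n) \<le> hom_F K c * n"
proof (cases "n = 0")
  case False
  then have "ln (hom_pf K c n) / n \<le> hom_F K c"
    unfolding hom_F_eq_SUP
    by (intro fekete_superadditive(2)[OF ln_hom_pf_superadditive ln_hom_pf_le_linear]) auto
  then show ?thesis using False by (simp add: divide_le_eq)
qed (simp add: hom_pf_def renewal_pf.simps)

lemma hom_F_nonneg_if_subexponential:
  assumes subexp: "\<And>\<epsilon> M. \<epsilon> > 0 \<Longrightarrow> \<exists>n\<ge>M. n \<ge> 1 \<and> K n > 0 \<and> ln (K n) \<ge> - \<epsilon> * n"
  shows "hom_F K c \<ge> 0"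
proof (rule field_le_epsilon)
  fix e :: real assume "e > 0"
  obtain M :: nat where M: "M > 2 * \<bar>c\<bar> / e" using reals_Archimedean2 by blast
  obtain n where n: "n \<ge> M" "n \<ge> 1" "K n > 0" "ln (K n) \<ge> - (e/2) * n"
    using subexp[of "e/2" M] \<open>e > 0\<close> by auto
  have "exp c * K n \<le> hom_pf K c n"
    unfolding hom_pf_def using renewal_pf_ge_single[where K=K, OF K_nonneg n(2), of "\<lambda>_. c" 0] by simp
  then have "ln (exp c * K n) \<le> ln (hom_pf K c n)" using n(3) by (intro ln_mono) auto
  then have "c - (e/2) * n \<le> hom_F K c * n"
    using n(3,4) ln_hom_pf_le[of c n] by (simp add: ln_mult)
  moreover have "2 * \<bar>c\<bar> < e * M" using M \<open>e > 0\<close> by (simp add: divide_less_eq mult.commute)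
  moreover have "e * M \<le> e * n" using n(1) \<open>e > 0\<close> by (intro mult_left_mono) auto
  ultimately have "(- e) * n < hom_F K c * n" using abs_ge_minus_self[of c] by linarith
  show "0 \<le> hom_F K c + e"
  proof (rule ccontr)
    assume "\<not> 0 \<le> hom_F K c + e"
    then have "hom_F K c * n \<le> (- e) * n" by (intro mult_right_mono) auto
    with \<open>(- e) * n < hom_F K c * n\<close> show False by simp
  qed
qed

text \<open>\<open>C\<^sub>0 e\<^bsup>F' n\<^esup>\<close> is a subsolution of the renewal recursion, so by induction it stays below
  \<open>hom_pf\<close>.\<close>
lemma hom_pf_exp_lower:
  assumes "m \<ge> 1" and tilt: "(\<Sum>g\<in>{1..m}. K g * exp (c - F' * g)) \<ge> 1"
  obtains C0 where "C0 > 0" "\<And>n. hom_pf K c n \<ge> C0 * exp (F' * n)"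
proof -
  define C0 where "C0 = Min ((\<lambda>n. hom_pf K c n * exp (- F' * n)) ` {..m})"
  have "C0 > 0" unfolding C0_def using hom_pf_pos by (subst Min_gr_iff) auto
  moreover have "hom_pf K c n \<ge> C0 * exp (F' * n)" for n
  proof (induction n rule: less_induct)
    case (less n)
    show ?case
    proof (cases "n \<le> m")
      case True
      then have "C0 \<le> hom_pf K c n * exp (- F' * n)" unfolding C0_def by (intro Min_le) auto
      then have "C0 * exp (F' * n) \<le> hom_pf K c n * exp (- F' * n) * exp (F' * n)"
        by (intro mult_right_mono) auto
      also have "\<dots> = hom_pf K c n" by (simp add: mult.assoc exp_add[symmetric])
      finally show ?thesis .
    next
      case False
      have "C0 * exp (F' * n) \<le> C0 * exp (F' * n) * (\<Sum>g\<in>{1..m}. K g * exp (c - F' * g))"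
        using tilt \<open>C0 > 0\<close> by simp
      also have "\<dots> = exp c * (\<Sum>g\<in>{1..m}. C0 * exp (F' * real (n - g)) * K g)"
        using False
        by (simp add: sum_distrib_left mult_ac exp_add[symmetric] algebra_simps of_nat_diff)
      also have "\<dots> \<le> exp c * (\<Sum>g\<in>{1..m}. hom_pf K c (n - g) * K g)"
      proof (intro mult_left_mono sum_mono mult_right_mono)
        fix g assume "g \<in> {1..m}"
        then show "C0 * exp (F' * real (n - g)) \<le> hom_pf K c (n - g)"
          using less.IH[of "n - g"] False by simp
      qed (use K_nonneg in auto)
      also have "\<dots> \<le> exp c * (\<Sum>g\<in>{1..n}. hom_pf K c (n - g) * K g)"
        using False
        by (intro mult_left_mono sum_mono2) (auto intro!: mult_nonneg_nonneg less_imp_le[OF hom_pf_pos] K_nonneg)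
      also have "\<dots> = hom_pf K c n" using hom_pf_rec[of n] False \<open>m \<ge> 1\<close> by simp
      finally show ?thesis .
    qed
  qed
  ultimately show ?thesis using that by blast
qed

lemma tilted_kernel_sum_le_1: "(\<Sum>g\<in>{1..m}. K g * exp (c - hom_F K c * g)) \<le> 1"
proof (rule ccontr)
  define F where "F = hom_F K c"
  define G where "G = (\<Sum>g\<in>{1..m}. K g * exp (c - F * g))"
  assume "\<not> ?thesis"
  then have "G > 1" unfolding G_def F_def by simp
  then have "m \<ge> 1" unfolding G_def by (cases "m = 0") auto
  define \<delta> where "\<delta> = ln G / m"
  have "\<delta> > 0" using \<open>G > 1\<close> \<open>m \<ge> 1\<close> unfolding \<delta>_def by simp
  have "1 = G * exp (- \<delta> * m)" unfolding \<delta>_def using \<open>m \<ge> 1\<close> \<open>G > 1\<close> by (simp add: exp_minus)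
  also have "\<dots> = (\<Sum>g\<in>{1..m}. K g * exp (c - F * g) * exp (- \<delta> * m))"
    unfolding G_def by (simp add: sum_distrib_right)
  also have "\<dots> \<le> (\<Sum>g\<in>{1..m}. K g * exp (c - (F + \<delta>) * g))"
  proof (intro sum_mono)
    fix g assume "g \<in> {1..m}"
    then have "exp (c - F * g) * exp (- \<delta> * m) \<le> exp (c - (F + \<delta>) * g)"
      unfolding exp_add[symmetric] using \<open>\<delta> > 0\<close>
      by (intro exp_mono) (auto simp: algebra_simps intro!: mult_left_mono)
    then show "K g * exp (c - F * g) * exp (- \<delta> * m) \<le> K g * exp (c - (F + \<delta>) * g)"
      using K_nonneg[of g] by (simp add: mult.assoc mult_left_mono)
  qed
  finally obtain C0 where "C0 > 0" and C0: "\<And>n. hom_pf K c n \<ge> C0 * exp ((F + \<delta>) * n)"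
    using hom_pf_exp_lower[OF \<open>m \<ge> 1\<close>] by blast
  have "ln C0 + (F + \<delta>) * n \<le> F * n" for n :: nat
  proof -
    have "ln (C0 * exp ((F + \<delta>) * n)) \<le> ln (hom_pf K c n)"
      using C0[of n] \<open>C0 > 0\<close> by (intro ln_mono) auto
    then show ?thesis using ln_hom_pf_le[of c n] \<open>C0 > 0\<close> unfolding F_def by (simp add: ln_mult)
  qed
  moreover obtain n :: nat where "n > \<bar>ln C0\<bar> / \<delta>" using reals_Archimedean2 by blast
  then have "\<delta> * n > \<bar>ln C0\<bar>" using \<open>\<delta> > 0\<close> by (simp add: field_simps)
  ultimately show False by (smt (verit) distrib_right)
qed

definition (in -) kernel_tail :: "(nat \<Rightarrow> real) \<Rightarrow> nat \<Rightarrow> real" where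
  "kernel_tail K D = 1 - (\<Sum>g\<in>{1..D}. K g)"

lemma kernel_tail_nonneg: "kernel_tail K D \<ge> 0"
  using K_partial_sum_le_1[of D] by (simp add: kernel_tail_def)

lemma sum_kernel_beyond_le_tail: "(\<Sum>g\<in>{1..c}. if D < g then K g else 0) \<le> kernel_tail K D"
proof -
  define m where "m = max c D"
  have "(\<Sum>g\<in>{1..c}. if D < g then K g else 0) \<le> (\<Sum>g\<in>{1..m}. if D < g then K g else 0)"
    unfolding m_def by (intro sum_mono2) (auto intro: K_nonneg)
  also have "\<dots> = (\<Sum>g\<in>{D<..m}. K g)"
  proof -
    have "{1..m} \<inter> {g. D < g} = {D<..m}" by auto
    then show ?thesis by (simp add: sum.If_cases)
  qed
  also have "\<dots> = (\<Sum>g\<in>{1..m}. K g) - (\<Sum>g\<in>{1..D}. K g)"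
  proof -
    have "{1..m} = {1..D} \<union> {D<..m}" "{1..D} \<inter> {D<..m} = {}" unfolding m_def by auto
    then show ?thesis by (simp add: sum.union_disjoint)
  qed
  finally show ?thesis using K_partial_sum_le_1[of m] unfolding kernel_tail_def by simp
qed

end

section \<open>Pathwise upper bound\<close>

definition step_changes :: "(nat \<Rightarrow> 'a) \<Rightarrow> nat set \<Rightarrow> real" where
  "step_changes v A = (\<Sum>j\<in>A. if v j = v (Suc j) then 0 else 1)"

lemma step_changes_nonneg: "step_changes v A \<ge> 0"
  unfolding step_changes_def by (intro sum_nonneg) auto

lemma step_changes_ge_1:
  assumes "finite A" "j \<in> A" "v j \<noteq> v (Suc j)"
  shows "step_changes v A \<ge> 1"
  using member_le_sum[of j A "\<lambda>j. if v j = v (Suc j) then 0 else (1::real)"] assms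
  unfolding step_changes_def by auto

lemma exists_step_change:
  fixes v :: "nat \<Rightarrow> 'a"
  assumes "i \<in> {a+1..c}" "v i \<noteq> v c"
  shows "\<exists>j\<in>{a+1..<c}. v j \<noteq> v (Suc j)"
proof (rule ccontr)
  assume "\<not> ?thesis"
  then have step: "\<And>j. a + 1 \<le> j \<Longrightarrow> j < c \<Longrightarrow> v j = v (Suc j)" by auto
  have "a + 1 \<le> c - d \<Longrightarrow> v (c - d) = v c" for d
  proof (induction d)
    case (Suc d)
    then have "v (c - Suc d) = v (Suc (c - Suc d))" by (intro step) auto
    also have "Suc (c - Suc d) = c - d" using Suc.prems by simp
    finally show ?case using Suc by simp
  qed simp
  from this[of "c - i"] assms show False by auto
qed

lemma prod_one_plus_mono:
  fixes x :: "nat \<Rightarrow> real"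
  assumes "\<And>n. x n \<ge> 0" and "a \<le> b"
  shows "(\<Prod>n\<in>{1..a}. 1 + x n) \<le> (\<Prod>n\<in>{1..b}. 1 + x n)"
proof -
  have "{1..b} = {1..a} \<union> {a<..b}" "{1..a} \<inter> {a<..b} = {}" using assms(2) by auto
  moreover have "(\<Prod>n\<in>{a<..b}. 1 + x n) \<ge> 1" using assms(1) by (intro prod_ge_1) auto
  moreover have "(\<Prod>n\<in>{1..a}. 1 + x n) \<ge> 0" using assms(1) by (intro prod_nonneg) (auto intro: add_nonneg_nonneg)
  ultimately show ?thesis by (simp add: prod.union_disjoint mult_le_cancel_left1)
qed

context renewal_kernel
begin

text \<open>A renewal gap \<open>c - a\<close> either sees a constant potential, or is longer than \<open>D\<close>, or
  contains a step change of \<open>v\<close> within distance \<open>D\<close> before \<open>c\<close>.\<close>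
lemma kernel_term_le:
  assumes F_nonneg: "\<And>x. hom_F K x \<ge> 0" and "\<bar>v c\<bar> \<le> C" and "a < c"
  shows "K (c - a) * exp (v c - (\<Sum>n\<in>{a+1..c}. hom_F K (v n))) \<le>
    K (c - a) * exp (v c - hom_F K (v c) * real (c - a)) +
    exp C * (step_changes v {c-D..<c} * K (c - a) + (if D < c - a then K (c - a) else 0))"
    (is "?lhs \<le> ?main + ?err")
proof -
  have "?err \<ge> 0" using step_changes_nonneg[of v "{c-D..<c}"] K_nonneg[of "c - a"] by simp
  moreover have "?main \<ge> 0" using K_nonneg[of "c - a"] by simp
  moreover have "?lhs = ?main \<or> ?lhs \<le> ?err"
  proof (cases "\<forall>i\<in>{a+1..c}. v i = v c")
    case True
    have "hom_F K (v n) = hom_F K (v c)" if "n \<in> {a+1..c}" for n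
      using True that by metis
    then have "(\<Sum>n\<in>{a+1..c}. hom_F K (v n)) = (\<Sum>n\<in>{a+1..c}. hom_F K (v c))"
      by (rule sum.cong[OF refl])
    then show ?thesis using \<open>a < c\<close> by (simp add: mult.commute)
  next
    case False
    then obtain i where i: "i \<in> {a+1..c}" "v i \<noteq> v c" by auto
    have "0 \<le> (\<Sum>n\<in>{a+1..c}. hom_F K (v n))" using F_nonneg by (intro sum_nonneg) auto
    then have lhs_le: "?lhs \<le> K (c - a) * exp C"
      using K_nonneg[of "c - a"] \<open>\<bar>v c\<bar> \<le> C\<close> by (intro mult_left_mono) auto
    have K_le: "K (c - a) \<le> step_changes v {c-D..<c} * K (c - a) + (if D < c - a then K (c - a) else 0)"
    proof (cases "D < c - a")
      case False
      obtain j where "j \<in> {a+1..<c}" "v j \<noteq> v (Suc j)" using exists_step_change[OF i] by blast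
      then have "step_changes v {c-D..<c} \<ge> 1" using False by (intro step_changes_ge_1) auto
      then show ?thesis using K_nonneg[of "c - a"] False by (simp add: mult_le_cancel_right1)
    qed (use step_changes_nonneg[of v "{c-D..<c}"] K_nonneg[of "c - a"] in simp)
    have "K (c - a) * exp C \<le> ?err"
      using mult_right_mono[OF K_le, of "exp C"] by (simp add: mult.commute)
    then have "?lhs \<le> ?err" using lhs_le by linarith
    then show ?thesis by simp
  qed
  ultimately show ?thesis by linarith
qed

lemma renewal_step_le:
  assumes F_nonneg: "\<And>x. hom_F K x \<ge> 0" and "\<bar>v c\<bar> \<le> C"
  shows "(\<Sum>a<c. K (c - a) * exp (v c - (\<Sum>n\<in>{a+1..c}. hom_F K (v n))))
     \<le> 1 + exp C * (step_changes v {c-D..<c} + kernel_tail K D)"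
proof -
  let ?J = "step_changes v {c-D..<c}" and ?F = "hom_F K (v c)"
  have "(\<Sum>a<c. K (c - a) * exp (v c - (\<Sum>n\<in>{a+1..c}. hom_F K (v n)))) \<le>
      (\<Sum>a<c. K (c - a) * exp (v c - ?F * real (c - a)) +
        exp C * (?J * K (c - a) + (if D < c - a then K (c - a) else 0)))"
    using kernel_term_le[where v=v and c=c and D=D, OF F_nonneg \<open>\<bar>v c\<bar> \<le> C\<close>] by (intro sum_mono) auto
  also have "\<dots> = (\<Sum>a<c. K (c - a) * exp (v c - ?F * real (c - a))) +
      exp C * (?J * (\<Sum>a<c. K (c - a)) + (\<Sum>a<c. if D < c - a then K (c - a) else 0))"
    by (simp only: sum.distrib flip: sum_distrib_left)
  also have "\<dots> = (\<Sum>g\<in>{1..c}. K g * exp (v c - ?F * real g)) +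
      exp C * (?J * (\<Sum>g\<in>{1..c}. K g) + (\<Sum>g\<in>{1..c}. if D < g then K g else 0))"
    unfolding sum_lessThan_reflect[of "\<lambda>g. K g * exp (v c - ?F * real g)" c]
      sum_lessThan_reflect[of K c] sum_lessThan_reflect[of "\<lambda>g. if D < g then K g else 0" c] ..
  also have "\<dots> \<le> 1 + exp C * (?J + kernel_tail K D)"
    using tilted_kernel_sum_le_1 sum_kernel_beyond_le_tail K_partial_sum_le_1[of c]
      step_changes_nonneg[of v "{c-D..<c}"]
    by (intro add_mono mult_left_mono) (auto simp: mult_left_le)
  finally show ?thesis .
qed

lemma renewal_pf_le_exp_hom_F:
  assumes F_nonneg: "\<And>x. hom_F K x \<ge> 0" and bound: "\<And>n. 1 \<le> n \<Longrightarrow> n \<le> N \<Longrightarrow> \<bar>v n\<bar> \<le> C"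
    and "c \<le> N"
  shows "renewal_pf K v 0 c \<le> exp (\<Sum>n\<in>{1..c}. hom_F K (v n)) *
    (\<Prod>n\<in>{1..c}. 1 + exp C * (step_changes v {n-D..<n} + kernel_tail K D))"
  using \<open>c \<le> N\<close>
proof (induction c rule: less_induct)
  case (less c)
  define S where "S c = (\<Sum>n\<in>{1..c}. hom_F K (v n))" for c
  define P where "P c = (\<Prod>n\<in>{1..c}. 1 + exp C * (step_changes v {n-D..<n} + kernel_tail K D))" for c
  have P_nonneg: "P c \<ge> 0" for c
    unfolding P_def using step_changes_nonneg kernel_tail_nonneg
    by (intro prod_nonneg) (auto intro!: add_nonneg_nonneg mult_nonneg_nonneg)
  show ?case
  proof (cases "c = 0")
    case False
    have "renewal_pf K v 0 c = exp (v c) * (\<Sum>a<c. renewal_pf K v 0 a * K (c - a))"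
      using False by (subst renewal_pf.simps) simp
    also have "\<dots> \<le> exp (v c) * (\<Sum>a<c. (exp (S a) * P (c - 1)) * K (c - a))"
    proof (intro mult_left_mono sum_mono mult_right_mono)
      fix a assume "a \<in> {..<c}"
      then have "renewal_pf K v 0 a \<le> exp (S a) * P a" using less unfolding S_def P_def by simp
      also have "\<dots> \<le> exp (S a) * P (c - 1)"
        unfolding P_def using \<open>a \<in> {..<c}\<close> step_changes_nonneg kernel_tail_nonneg
        by (intro mult_left_mono prod_one_plus_mono) (auto intro!: mult_nonneg_nonneg add_nonneg_nonneg)
      finally show "renewal_pf K v 0 a \<le> exp (S a) * P (c - 1)" .
    qed (auto intro: K_nonneg)
    also have "\<dots> = P (c - 1) * exp (S c) * (\<Sum>a<c. K (c - a) * exp (v c - (\<Sum>n\<in>{a+1..c}. hom_F K (v n))))"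
    proof -
      have "exp (v c) * (exp (S a) * P (c - 1) * K (c - a)) =
          P (c - 1) * exp (S c) * (K (c - a) * exp (v c - (\<Sum>n\<in>{a+1..c}. hom_F K (v n))))"
        if "a < c" for a
      proof -
        have "{1..c} = {1..a} \<union> {a+1..c}" "{1..a} \<inter> {a+1..c} = {}" using that by auto
        then have "(\<Sum>n\<in>{a+1..c}. hom_F K (v n)) = S c - S a"
          unfolding S_def by (simp add: sum.union_disjoint)
        then have "exp (v c - (\<Sum>n\<in>{a+1..c}. hom_F K (v n))) = exp (v c) * exp (S a) / exp (S c)"
          by (simp add: exp_diff exp_add)
        then show ?thesis by (simp add: field_simps)
      qed
      then show ?thesis unfolding sum_distrib_left by (intro sum.cong refl) simp
    qed
    also have "\<dots> \<le> P (c - 1) * exp (S c) * (1 + exp C * (step_changes v {c-D..<c} + kernel_tail K D))"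
    proof -
      have "\<bar>v c\<bar> \<le> C" using bound False less.prems by simp
      then show ?thesis using renewal_step_le[OF F_nonneg] P_nonneg by (intro mult_left_mono) auto
    qed
    also have "\<dots> = exp (S c) * P c"
      using False unfolding P_def by (cases c) (simp_all add: prod.nat_ivl_Suc' mult_ac)
    finally show ?thesis unfolding S_def P_def .
  qed (simp add: renewal_pf.simps)
qed

lemma ln_renewal_pf_le:
  assumes "\<And>x. hom_F K x \<ge> 0" and "\<And>n. 1 \<le> n \<Longrightarrow> n \<le> N \<Longrightarrow> \<bar>v n\<bar> \<le> C"
  shows "ln (renewal_pf K v 0 N) \<le>
    (\<Sum>n\<in>{1..N}. hom_F K (v n)) + exp C * (\<Sum>n\<in>{1..N}. step_changes v {n-D..<n} + kernel_tail K D)"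
proof -
  define x where "x n = exp C * (step_changes v {n-D..<n} + kernel_tail K D)" for n
  have "x n \<ge> 0" for n
    unfolding x_def using step_changes_nonneg kernel_tail_nonneg by (intro mult_nonneg_nonneg add_nonneg_nonneg) auto
  then have pos: "1 + x n > 0" for n by (simp add: add_pos_nonneg)
  have "ln (renewal_pf K v 0 N) \<le> ln (exp (\<Sum>n\<in>{1..N}. hom_F K (v n)) * (\<Prod>n\<in>{1..N}. 1 + x n))"
    using renewal_pf_le_exp_hom_F[OF assms order.refl] renewal_pf_pos
    unfolding x_def by (intro ln_mono) auto
  also have "\<dots> = (\<Sum>n\<in>{1..N}. hom_F K (v n)) + (\<Sum>n\<in>{1..N}. ln (1 + x n))"
    using pos by (simp add: ln_mult ln_prod prod_pos less_imp_neq[symmetric])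
  also have "\<dots> \<le> (\<Sum>n\<in>{1..N}. hom_F K (v n)) + (\<Sum>n\<in>{1..N}. x n)"
    using \<open>\<And>n. x n \<ge> 0\<close> by (intro add_left_mono sum_mono ln_add_one_self_le_self) auto
  finally show ?thesis unfolding x_def by (simp add: sum_distrib_left)
qed

section \<open>Pathwise lower bound\<close>

lemma ln_renewal_pf_ge_linear:
  assumes "\<And>i. 1 \<le> i \<Longrightarrow> i \<le> k \<Longrightarrow> \<bar>v (a+i)\<bar> \<le> C"
  shows "ln (renewal_pf K v a k) \<ge> - (real k * (\<bar>ln (K 1)\<bar> + C))"
proof -
  have pos: "K 1 * exp (v (a+i)) > 0" for i using K_1_pos by simp
  have "- (real k * (\<bar>ln (K 1)\<bar> + C)) = (\<Sum>i\<in>{1..k}. - (\<bar>ln (K 1)\<bar> + C))"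
    by (simp add: algebra_simps)
  also have "\<dots> \<le> (\<Sum>i\<in>{1..k}. ln (K 1) + v (a+i))"
    using assms by (intro sum_mono) (smt (verit) atLeastAtMost_iff)
  also have "\<dots> = ln (\<Prod>i\<in>{1..k}. K 1 * exp (v (a+i)))"
    using pos K_1_pos by (simp add: ln_prod ln_mult less_imp_neq[symmetric])
  also have "\<dots> \<le> ln (renewal_pf K v a k)"
    using renewal_pf_ge_prod[where K=K, OF K_nonneg, of v a k] pos by (intro ln_mono) (auto intro: prod_pos)
  finally show ?thesis .
qed

lemma renewal_pf_ge_blocks: "renewal_pf K v 0 (q * l) \<ge> (\<Prod>b<q. renewal_pf K v (b * l) l)"
proof (induction q)
  case (Suc q)
  have "(\<Prod>b<Suc q. renewal_pf K v (b * l) l) = (\<Prod>b<q. renewal_pf K v (b * l) l) * renewal_pf K v (q * l) l"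
    by simp
  also have "\<dots> \<le> renewal_pf K v 0 (q * l) * renewal_pf K v (q * l) l"
    using Suc renewal_pf_pos by (intro mult_right_mono) (auto intro: less_imp_le)
  also have "\<dots> \<le> renewal_pf K v 0 (q * l + l)"
    using renewal_pf_supermult[where K=K, OF K_nonneg, of v 0 "q*l" l] by simp
  finally show ?case by (simp add: add.commute)
qed (simp add: renewal_pf.simps)

text \<open>On a block where \<open>v\<close> is constant the partition function is homogeneous; otherwise
  the a priori bounds on both sides are absorbed by the penalty.\<close>
lemma ln_renewal_pf_block_ge:
  assumes "l \<ge> 1" and bound: "\<And>i. 1 \<le> i \<Longrightarrow> i \<le> l \<Longrightarrow> \<bar>v (a+i)\<bar> \<le> C"
    and hom_bound: "ln (hom_pf K (v (a+1)) l) \<le> B"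
  shows "ln (renewal_pf K v a l) \<ge>
    ln (hom_pf K (v (a+1)) l) - (B + l * (\<bar>ln (K 1)\<bar> + C)) * step_changes v {a+1..<a+l}"
proof (cases "\<forall>j\<in>{a+1..<a+l}. v j = v (Suc j)")
  case True
  have const: "v i = v (a+l)" if "i \<in> {a+1..a+l}" for i
    using exists_step_change[OF that] True by auto
  have "v (a+i) = v (a+1)" if "1 \<le> i" "i \<le> l" for i
    using const[of "a+i"] const[of "a+1"] that \<open>l \<ge> 1\<close> by simp
  then have "renewal_pf K v a l = hom_pf K (v (a+1)) l"
    unfolding hom_pf_def by (rule renewal_pf_cong)
  then show ?thesis unfolding step_changes_def using True by simp
next
  case False
  then obtain j where "j \<in> {a+1..<a+l}" "v j \<noteq> v (Suc j)" by blast
  then have "step_changes v {a+1..<a+l} \<ge> 1" by (intro step_changes_ge_1) auto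
  moreover have "ln (renewal_pf K v a l) \<ge> - (l * (\<bar>ln (K 1)\<bar> + C))"
    using bound by (rule ln_renewal_pf_ge_linear)
  moreover have "ln (hom_pf K (v (a+1)) l) \<ge> - (l * (\<bar>ln (K 1)\<bar> + C))"
    unfolding hom_pf_def using bound[of 1] \<open>l \<ge> 1\<close> by (intro ln_renewal_pf_ge_linear) auto
  ultimately show ?thesis using hom_bound
    by (smt (verit, best) mult_le_cancel_left1)
qed

lemma ln_renewal_pf_ge_blocks:
  assumes "l \<ge> 1" and bound: "\<And>n. 1 \<le> n \<Longrightarrow> n \<le> N \<Longrightarrow> \<bar>v n\<bar> \<le> C"
    and hom_bound: "\<And>n. 1 \<le> n \<Longrightarrow> n \<le> N \<Longrightarrow> ln (hom_pf K (v n) l) \<le> B" and "C \<ge> 0"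
  shows "ln (renewal_pf K v 0 N) \<ge> (\<Sum>b<N div l. ln (hom_pf K (v (b*l+1)) l)
           - (B + l * (\<bar>ln (K 1)\<bar> + C)) * step_changes v {b*l+1..<b*l+l})
           - l * (\<bar>ln (K 1)\<bar> + C)"
proof -
  define q where "q = N div l"
  define r where "r = N mod l"
  have "N = q * l + r" unfolding q_def r_def by simp
  have "r < l" unfolding r_def using \<open>l \<ge> 1\<close> by simp
  have "(\<Prod>b<q. renewal_pf K v (b * l) l) * renewal_pf K v (q*l) r \<le>
      renewal_pf K v 0 (q*l) * renewal_pf K v (q*l) r"
    using renewal_pf_ge_blocks renewal_pf_pos by (intro mult_right_mono) (auto intro: less_imp_le)
  also have "\<dots> \<le> renewal_pf K v 0 N"
    using renewal_pf_supermult[where K=K, OF K_nonneg, of v 0 "q*l" r] \<open>N = q * l + r\<close> by simp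
  finally have "ln ((\<Prod>b<q. renewal_pf K v (b * l) l) * renewal_pf K v (q*l) r) \<le> ln (renewal_pf K v 0 N)"
    using renewal_pf_pos by (intro ln_mono) (auto intro!: mult_pos_pos prod_pos)
  then have "ln (renewal_pf K v 0 N) \<ge> ln ((\<Prod>b<q. renewal_pf K v (b * l) l) * renewal_pf K v (q*l) r)" .
  also have "ln ((\<Prod>b<q. renewal_pf K v (b * l) l) * renewal_pf K v (q*l) r) =
      (\<Sum>b<q. ln (renewal_pf K v (b * l) l)) + ln (renewal_pf K v (q*l) r)"
    using renewal_pf_pos by (simp add: ln_mult ln_prod less_imp_neq[symmetric] prod_pos)
  finally have split: "ln (renewal_pf K v 0 N) \<ge>
      (\<Sum>b<q. ln (renewal_pf K v (b * l) l)) + ln (renewal_pf K v (q*l) r)" .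
  have "ln (renewal_pf K v (q*l) r) \<ge> - (real r * (\<bar>ln (K 1)\<bar> + C))"
    using bound \<open>N = q * l + r\<close> by (intro ln_renewal_pf_ge_linear) auto
  moreover have "real r * (\<bar>ln (K 1)\<bar> + C) \<le> real l * (\<bar>ln (K 1)\<bar> + C)"
    using \<open>r < l\<close> \<open>C \<ge> 0\<close> by (intro mult_right_mono) auto
  moreover have "(\<Sum>b<q. ln (renewal_pf K v (b * l) l)) \<ge> (\<Sum>b<q. ln (hom_pf K (v (b*l+1)) l)
           - (B + l * (\<bar>ln (K 1)\<bar> + C)) * step_changes v {b*l+1..<b*l+l})"
  proof (intro sum_mono)
    fix b assume "b \<in> {..<q}"
    then have "b * l + l \<le> N"
      using \<open>N = q * l + r\<close> by (metis add.commute le_add1 lessThan_iff mult_Suc mult_le_mono1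
          Suc_leI order_trans)
    then show "ln (hom_pf K (v (b*l+1)) l) - (B + l * (\<bar>ln (K 1)\<bar> + C)) * step_changes v {b*l+1..<b*l+l}
        \<le> ln (renewal_pf K v (b * l) l)"
      using \<open>l \<ge> 1\<close> by (intro ln_renewal_pf_block_ge bound hom_bound) auto
  qed
  ultimately show ?thesis using split unfolding q_def by linarith
qed

end

section \<open>Expectations under a stationary Markov chain\<close>

lemma markov_expect_cong:
  assumes "\<And>w. w \<in> PiE {0..N} (\<lambda>_. \<Sigma>) \<Longrightarrow> f w = g w"
  shows "markov_expect \<Sigma> \<mu> P N f = markov_expect \<Sigma> \<mu> P N g"
  unfolding markov_expect_def using assms by (intro sum.cong refl) auto

lemma markov_expect_add: "markov_expect \<Sigma> \<mu> P N (\<lambda>w. f w + g w) = markov_expect \<Sigma> \<mu> P N f + markov_expect \<Sigma> \<mu> P N g"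
  unfolding markov_expect_def by (simp add: distrib_left sum.distrib)

lemma markov_expect_diff: "markov_expect \<Sigma> \<mu> P N (\<lambda>w. f w - g w) = markov_expect \<Sigma> \<mu> P N f - markov_expect \<Sigma> \<mu> P N g"
  unfolding markov_expect_def by (simp add: right_diff_distrib sum_subtractf)

lemma markov_expect_cmult: "markov_expect \<Sigma> \<mu> P N (\<lambda>w. c * f w) = c * markov_expect \<Sigma> \<mu> P N f"
  unfolding markov_expect_def by (simp add: sum_distrib_left mult_ac)

lemma markov_expect_divide: "markov_expect \<Sigma> \<mu> P N (\<lambda>w. f w / c) = markov_expect \<Sigma> \<mu> P N f / c"
  unfolding markov_expect_def by (simp add: sum_divide_distrib)

lemma markov_expect_sum: "markov_expect \<Sigma> \<mu> P N (\<lambda>w. \<Sum>i\<in>I. f i w) = (\<Sum>i\<in>I. markov_expect \<Sigma> \<mu> P N (f i))"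
  unfolding markov_expect_def by (simp add: sum_distrib_left sum.swap[where A=I])

lemma markov_expect_mono:
  assumes "\<And>x. x \<in> \<Sigma> \<Longrightarrow> \<mu> x \<ge> 0" "\<And>x y. x \<in> \<Sigma> \<Longrightarrow> y \<in> \<Sigma> \<Longrightarrow> P x y \<ge> 0"
    and "\<And>w. w \<in> PiE {0..N} (\<lambda>_. \<Sigma>) \<Longrightarrow> f w \<le> g w"
  shows "markov_expect \<Sigma> \<mu> P N f \<le> markov_expect \<Sigma> \<mu> P N g"
  unfolding markov_expect_def
proof (rule sum_mono)
  fix w assume w: "w \<in> PiE {0..N} (\<lambda>_. \<Sigma>)"
  have "\<mu> (w 0) \<ge> 0" using w assms(1) by (auto simp: PiE_def Pi_def)
  moreover have "(\<Prod>i\<in>{1..N}. P (w (i - 1)) (w i)) \<ge> 0"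
    using w assms(2) by (intro prod_nonneg) (auto simp: PiE_def Pi_def)
  ultimately show "\<mu> (w 0) * (\<Prod>i\<in>{1..N}. P (w (i - 1)) (w i)) * f w \<le>
      \<mu> (w 0) * (\<Prod>i\<in>{1..N}. P (w (i - 1)) (w i)) * g w"
    using assms(3)[OF w] by (intro mult_left_mono) auto
qed

lemma markov_expect_0:
  "markov_expect \<Sigma> \<mu> P 0 f = (\<Sum>y\<in>\<Sigma>. \<mu> y * f ((\<lambda>_. undefined)(0 := y)))"
proof -
  have w_eq: "(\<lambda>_. undefined)(0 := w 0) = w" if "w \<in> PiE {0..0} (\<lambda>_. \<Sigma>)" for w :: "nat \<Rightarrow> real"
    using that by (auto simp: PiE_def extensional_def fun_eq_iff)
  show ?thesis
    unfolding markov_expect_def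
    by (rule sum.reindex_bij_witness[where i="\<lambda>y. (\<lambda>_. undefined)(0 := y)" and j="\<lambda>w. w 0"])
      (auto simp: w_eq PiE_def extensional_def)
qed

lemma markov_expect_Suc:
  assumes finite_states: "finite \<Sigma>"
  shows "markov_expect \<Sigma> \<mu> P (Suc n) f =
    markov_expect \<Sigma> \<mu> P n (\<lambda>w. \<Sum>y\<in>\<Sigma>. P (w n) y * f (w(Suc n := y)))"
proof -
  have e: "PiE {0..Suc n} (\<lambda>_. \<Sigma>) = (\<lambda>(y, g). g(Suc n := y)) ` (\<Sigma> \<times> PiE {0..n} (\<lambda>_. \<Sigma>))"
    using PiE_insert_eq[of "Suc n" "{0..n}" "\<lambda>_. \<Sigma>"] by (simp add: atLeast0_atMost_Suc)
  have inj: "inj_on (\<lambda>(y, g). g(Suc n := y)) (\<Sigma> \<times> PiE {0..n} (\<lambda>_. \<Sigma>))"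
    using inj_combinator[of "Suc n" "{0..n}" "\<lambda>_. \<Sigma>"] by simp
  have pr: "(\<Prod>i\<in>{1..Suc n}. P ((w(Suc n := y)) (i - 1)) ((w(Suc n := y)) i)) =
      (\<Prod>i\<in>{1..n}. P (w (i - 1)) (w i)) * P (w n) y" for w y
  proof -
    have "(\<Prod>i\<in>{1..Suc n}. P ((w(Suc n := y)) (i - 1)) ((w(Suc n := y)) i)) =
       (\<Prod>i\<in>{1..n}. P ((w(Suc n := y)) (i - 1)) ((w(Suc n := y)) i)) * P (w n) y"
      by (simp add: prod.nat_ivl_Suc')
    also have "(\<Prod>i\<in>{1..n}. P ((w(Suc n := y)) (i - 1)) ((w(Suc n := y)) i)) = (\<Prod>i\<in>{1..n}. P (w (i - 1)) (w i))"
      by (intro prod.cong refl) auto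
    finally show ?thesis .
  qed
  have "markov_expect \<Sigma> \<mu> P (Suc n) f =
     (\<Sum>(y, w)\<in>\<Sigma> \<times> PiE {0..n} (\<lambda>_. \<Sigma>). \<mu> (w 0) * ((\<Prod>i\<in>{1..n}. P (w (i - 1)) (w i)) * P (w n) y) * f (w(Suc n := y)))"
    unfolding markov_expect_def e sum.reindex[OF inj] by (simp only: comp_def split_def pr) simp
  also have "\<dots> = (\<Sum>y\<in>\<Sigma>. \<Sum>w\<in>PiE {0..n} (\<lambda>_. \<Sigma>). \<mu> (w 0) * ((\<Prod>i\<in>{1..n}. P (w (i - 1)) (w i)) * P (w n) y) * f (w(Suc n := y)))"
    by (simp add: sum.cartesian_product)
  also have "\<dots> = markov_expect \<Sigma> \<mu> P n (\<lambda>w. \<Sum>y\<in>\<Sigma>. P (w n) y * f (w(Suc n := y)))"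
    unfolding markov_expect_def by (subst sum.swap) (simp add: sum_distrib_left sum_distrib_right mult_ac)
  finally show ?thesis .
qed

locale stationary_chain =
  fixes \<Sigma> :: "real set" and \<mu> :: "real \<Rightarrow> real" and P :: "real \<Rightarrow> real \<Rightarrow> real"
  assumes finite_states: "finite \<Sigma>"
    and rows_sum_1: "\<And>x. x \<in> \<Sigma> \<Longrightarrow> (\<Sum>y\<in>\<Sigma>. P x y) = 1"
    and invariant: "\<And>y. y \<in> \<Sigma> \<Longrightarrow> (\<Sum>x\<in>\<Sigma>. \<mu> x * P x y) = \<mu> y"
    and mu_nonneg: "\<And>x. x \<in> \<Sigma> \<Longrightarrow> \<mu> x \<ge> 0"
    and P_nonneg: "\<And>x y. x \<in> \<Sigma> \<Longrightarrow> y \<in> \<Sigma> \<Longrightarrow> P x y \<ge> 0"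
    and mu_sum_1: "(\<Sum>x\<in>\<Sigma>. \<mu> x) = 1"
begin

abbreviation E where "E N f \<equiv> markov_expect \<Sigma> \<mu> P N f"

lemma expect_restrict:
  assumes dep: "\<And>w w'. (\<And>i. i \<le> k \<Longrightarrow> w i = w' i) \<Longrightarrow> f w = f w'"
    and kN: "k \<le> N"
  shows "E N f = E k f"
  using kN
proof (induction N)
  case 0 then show ?case by simp
next
  case (Suc N)
  show ?case
  proof (cases "k = Suc N")
    case True then show ?thesis by simp
  next
    case False
    then have kN: "k \<le> N" using Suc.prems by simp
    have "E (Suc N) f = E N (\<lambda>w. \<Sum>y\<in>\<Sigma>. P (w N) y * f (w(Suc N := y)))" by (rule markov_expect_Suc[OF finite_states])
    also have "\<dots> = E N f"
    proof (rule markov_expect_cong)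
      fix w assume w: "w \<in> PiE {0..N} (\<lambda>_. \<Sigma>)"
      have fy: "f (w(Suc N := y)) = f w" for y by (rule dep) (use kN in auto)
      have "(\<Sum>y\<in>\<Sigma>. P (w N) y * f (w(Suc N := y))) = (\<Sum>y\<in>\<Sigma>. P (w N) y) * f w"
        by (simp only: fy sum_distrib_right)
      also have "\<dots> = f w" using w rows_sum_1 by (auto simp: PiE_def Pi_def)
      finally show "(\<Sum>y\<in>\<Sigma>. P (w N) y * f (w(Suc N := y))) = f w" .
    qed
    also have "\<dots> = E k f" using Suc.IH kN by simp
    finally show ?thesis .
  qed
qed

lemma expect_state_last: "E n (\<lambda>w. \<psi> (w n)) = (\<Sum>x\<in>\<Sigma>. \<mu> x * \<psi> x)"
proof (induction n arbitrary: \<psi>)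
  case 0 then show ?case by (simp add: markov_expect_0)
next
  case (Suc n)
  have "E (Suc n) (\<lambda>w. \<psi> (w (Suc n))) = E n (\<lambda>w. \<Sum>y\<in>\<Sigma>. P (w n) y * \<psi> y)"
    by (simp add: markov_expect_Suc[OF finite_states])
  also have "\<dots> = (\<Sum>x\<in>\<Sigma>. \<mu> x * (\<Sum>y\<in>\<Sigma>. P x y * \<psi> y))" by (rule Suc.IH)
  also have "\<dots> = (\<Sum>x\<in>\<Sigma>. \<Sum>y\<in>\<Sigma>. \<mu> x * P x y * \<psi> y)"
    by (simp add: sum_distrib_left mult.assoc)
  also have "\<dots> = (\<Sum>y\<in>\<Sigma>. \<Sum>x\<in>\<Sigma>. \<mu> x * P x y * \<psi> y)"
    by (rule sum.swap)
  also have "\<dots> = (\<Sum>y\<in>\<Sigma>. (\<Sum>x\<in>\<Sigma>. \<mu> x * P x y) * \<psi> y)"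
    by (simp add: sum_distrib_right)
  also have "\<dots> = (\<Sum>y\<in>\<Sigma>. \<mu> y * \<psi> y)" using invariant by simp
  finally show ?case .
qed

lemma expect_state: "i \<le> N \<Longrightarrow> E N (\<lambda>w. \<psi> (w i)) = (\<Sum>x\<in>\<Sigma>. \<mu> x * \<psi> x)"
  using expect_restrict[of i "\<lambda>w. \<psi> (w i)" N] expect_state_last[of i \<psi>] by simp

lemma expect_const: "E N (\<lambda>w. c) = c"
  using expect_state[of 0 N "\<lambda>_. c"] mu_sum_1 by (simp add: sum_distrib_right[symmetric])

lemma expect_transition: "Suc j \<le> N \<Longrightarrow> E N (\<lambda>w. \<phi> (w j) (w (Suc j))) = (\<Sum>x\<in>\<Sigma>. \<mu> x * (\<Sum>y\<in>\<Sigma>. P x y * \<phi> x y))"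
proof -
  assume jN: "Suc j \<le> N"
  have "E N (\<lambda>w. \<phi> (w j) (w (Suc j))) = E (Suc j) (\<lambda>w. \<phi> (w j) (w (Suc j)))"
    using jN by (intro expect_restrict) auto
  also have "\<dots> = E j (\<lambda>w. \<Sum>y\<in>\<Sigma>. P (w j) y * \<phi> (w j) y)"
    by (simp add: markov_expect_Suc[OF finite_states])
  also have "\<dots> = (\<Sum>x\<in>\<Sigma>. \<mu> x * (\<Sum>y\<in>\<Sigma>. P x y * \<phi> x y))" by (rule expect_state_last)
  finally show ?thesis .
qed

lemma expect_mono: "(\<And>w. w \<in> PiE {0..N} (\<lambda>_. \<Sigma>) \<Longrightarrow> f w \<le> g w) \<Longrightarrow> E N f \<le> E N g"
  by (rule markov_expect_mono) (auto intro: mu_nonneg P_nonneg)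

end
section \<open>Regularly varying kernels\<close>

lemma partial_sum_le_1_if_sums_1:
  fixes K :: "nat \<Rightarrow> real"
  assumes "\<And>n. K n \<ge> 0" and "K sums 1"
  shows "(\<Sum>g\<in>{1..n}. K g) \<le> 1"
proof -
  have "(\<Sum>g\<in>{1..n}. K g) \<le> (\<Sum>g<Suc n. K g)"
    using assms(1) by (intro sum_mono2) auto
  also have "\<dots> \<le> 1" using sum_le_suminf[of K "{..<Suc n}"] assms by (auto simp: sums_iff)
  finally show ?thesis .
qed

lemma kernel_tail_tendsto_0:
  assumes "K 0 = 0" and "K sums 1"
  shows "kernel_tail K \<longlonglongrightarrow> 0"
proof -
  have partial: "(\<Sum>g\<in>{1..D}. K g) = (\<Sum>g<Suc D. K g)" for D
    using assms(1) by (induction D) (simp_all add: sum.nat_ivl_Suc')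
  have "(\<lambda>D. \<Sum>g<Suc D. K g) \<longlonglongrightarrow> 1"
    using LIMSEQ_Suc[OF assms(2)[unfolded sums_def]] .
  then have "(\<lambda>D. 1 - (\<Sum>g<Suc D. K g)) \<longlonglongrightarrow> 1 - 1" by (intro tendsto_diff tendsto_const)
  then show ?thesis unfolding kernel_tail_def partial by simp
qed

lemma slowly_varying_doubling_lower:
  assumes sv: "slowly_varying L"
  obtains n0 :: nat where "n0 \<ge> 1" and "\<And>k. L (real (2^k * n0)) \<ge> L (real n0) / 2^k"
proof -
  have L_pos: "\<And>x. x > 0 \<Longrightarrow> L x > 0" using sv unfolding slowly_varying_def by auto
  have "((\<lambda>x. L (2 * x) / L x) \<longlongrightarrow> 1) at_top" using sv unfolding slowly_varying_def by auto
  then have "eventually (\<lambda>x. 1/2 < L (2 * x) / L x) at_top" by (rule order_tendstoD) simp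
  then obtain X where X: "\<And>x. x \<ge> X \<Longrightarrow> 1/2 < L (2 * x) / L x"
    unfolding eventually_at_top_linorder by auto
  define n0 where "n0 = max 1 (nat \<lceil>X\<rceil>)"
  have "n0 \<ge> 1" "real n0 \<ge> X" unfolding n0_def by linarith+
  have "L (real (2^k * n0)) \<ge> L (real n0) / 2^k" for k
  proof (induction k)
    case (Suc k)
    have "n0 \<le> 2^k * n0" using mult_le_mono1[of 1 "2^k" n0] by simp
    then have "real n0 \<le> real (2^k * n0)" by (rule of_nat_mono)
    then have "real (2^k * n0) \<ge> X" using \<open>real n0 \<ge> X\<close> by linarith
    moreover have "real (2^k * n0) > 0" using \<open>n0 \<ge> 1\<close> by simp
    have "1/2 < L (2 * real (2^k * n0)) / L (real (2^k * n0))"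
      using X[OF \<open>real (2^k * n0) \<ge> X\<close>] .
    moreover have "real (2^Suc k * n0) = 2 * real (2^k * n0)" by simp
    ultimately have "L (real (2^k * n0)) / 2 < L (real (2^Suc k * n0))"
      using L_pos[OF \<open>real (2^k * n0) > 0\<close>] by (simp add: field_simps)
    have "L (real n0) / 2 ^ Suc k = (L (real n0) / 2^k) / 2" by simp
    also have "\<dots> \<le> L (real (2^k * n0)) / 2" using Suc.IH by (rule divide_right_mono) simp
    also note \<open>L (real (2^k * n0)) / 2 < L (real (2^Suc k * n0))\<close>
    finally show ?case by (rule less_imp_le)
  qed simp
  then show ?thesis using that \<open>n0 \<ge> 1\<close> by blast
qed

lemma kernel_subexponential:
  fixes K :: "nat \<Rightarrow> real"
  assumes sv: "slowly_varying L"
    and K_eq: "\<And>n. n \<ge> 1 \<Longrightarrow> K n = L (real n) * real n powr (-(1 + \<alpha>))" and "\<epsilon> > 0"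
  shows "\<exists>n\<ge>M. n \<ge> 1 \<and> K n > 0 \<and> ln (K n) \<ge> - \<epsilon> * n"
proof -
  have L_pos: "\<And>x. x > 0 \<Longrightarrow> L x > 0" using sv unfolding slowly_varying_def by auto
  obtain n0 :: nat where "n0 \<ge> 1" and n0: "\<And>k. L (real (2^k * n0)) \<ge> L (real n0) / 2^k"
    using slowly_varying_doubling_lower[OF sv] by blast
  define c0 where "c0 = ln (L (real n0))"
  define A where "A = \<bar>2 + \<alpha>\<bar> + 1"
  have "A > 0" unfolding A_def by simp
  have K_lower: "ln (K m) \<ge> c0 - A * ln (real m)" if "m = 2^k * n0" for m k
  proof -
    have "2^k \<le> m" using mult_le_mono2[OF \<open>n0 \<ge> 1\<close>, of "2^k"] that by simp
    then have "real m \<ge> 2^k" using of_nat_mono[OF \<open>2^k \<le> m\<close>] by simp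
    moreover have "(1::real) \<le> 2^k" by simp
    ultimately have "real m \<ge> 1" by linarith
    have "L (real n0) > 0" using L_pos \<open>n0 \<ge> 1\<close> by simp
    have "ln (K m) = ln (L (real m)) - (1 + \<alpha>) * ln (real m)"
      using K_eq[of m] L_pos[of "real m"] \<open>real m \<ge> 1\<close> by (simp add: ln_mult ln_powr algebra_simps)
    moreover have "ln (L (real m)) \<ge> c0 - k * ln 2"
    proof -
      have "ln (L (real n0) / 2^k) \<le> ln (L (real m))"
        using n0[of k] \<open>L (real n0) > 0\<close> that by (intro ln_mono) auto
      then show ?thesis unfolding c0_def using \<open>L (real n0) > 0\<close> by (simp add: ln_div ln_realpow)
    qed
    moreover have "k * ln 2 \<le> ln (real m)"
      using ln_mono[of "2^k" "real m"] \<open>real m \<ge> 2^k\<close> by (simp add: ln_realpow)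
    moreover have "0 \<le> ln (real m)" using \<open>real m \<ge> 1\<close> by simp
    moreover have "(2 + \<alpha>) * ln (real m) \<le> A * ln (real m)"
      unfolding A_def using \<open>0 \<le> ln (real m)\<close> by (intro mult_right_mono) auto
    moreover have "(2 + \<alpha>) * ln (real m) = ln (real m) + (1 + \<alpha>) * ln (real m)"
      by (simp add: algebra_simps)
    ultimately show ?thesis by linarith
  qed
  have "eventually (\<lambda>x::real. ln x / x < \<epsilon> / (2 * A)) at_top"
    using order_tendstoD(2)[OF ln_x_over_x_tendsto_0] \<open>\<epsilon> > 0\<close> \<open>A > 0\<close> by simp
  moreover have "eventually (\<lambda>x::real. \<bar>c0\<bar> / x < \<epsilon> / 2) at_top"
    using order_tendstoD(2)[OF tendsto_divide_0[OF tendsto_const filterlim_at_top_imp_at_infinity[OF filterlim_ident]]]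
      \<open>\<epsilon> > 0\<close> by simp
  ultimately obtain X where X: "\<And>x. x \<ge> X \<Longrightarrow> ln x / x < \<epsilon> / (2 * A) \<and> \<bar>c0\<bar> / x < \<epsilon> / 2"
    unfolding eventually_at_top_linorder by (metis (no_types, lifting) eventually_conj eventually_at_top_linorder)
  define k where "k = max M (nat \<lceil>X\<rceil>)"
  define m where "m = 2^k * n0"
  have "k < 2^k" by (rule less_exp)
  moreover have "2^k \<le> m" unfolding m_def using \<open>n0 \<ge> 1\<close> by simp
  ultimately have "k \<le> m" by linarith
  then have "m \<ge> M" "nat \<lceil>X\<rceil> \<le> m" unfolding k_def by auto
  then have "real m \<ge> X" using real_nat_ceiling_ge[of X] of_nat_mono by fastforce
  have "(1::nat) \<le> 2^k" by simp
  then have "m \<ge> 1" using \<open>2^k \<le> m\<close> by linarith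
  then have "ln (real m) < \<epsilon> / (2 * A) * m" "\<bar>c0\<bar> < \<epsilon> / 2 * m"
    using X[OF \<open>real m \<ge> X\<close>] \<open>m \<ge> 1\<close> by (simp_all add: divide_less_eq)
  moreover have "A * (\<epsilon> / (2 * A) * m) = \<epsilon> / 2 * m" using \<open>A > 0\<close> by (simp add: field_simps)
  ultimately have "A * ln (real m) < \<epsilon> / 2 * m"
    using \<open>A > 0\<close> mult_strict_left_mono[of "ln (real m)" "\<epsilon> / (2 * A) * m" A] by linarith
  then have "ln (K m) \<ge> - \<epsilon> * m"
    using K_lower[OF m_def] \<open>\<bar>c0\<bar> < \<epsilon> / 2 * m\<close> by linarith
  moreover have "K m > 0" using K_eq[of m] L_pos[of "real m"] \<open>m \<ge> 1\<close> by simp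
  ultimately show ?thesis using \<open>m \<ge> M\<close> \<open>m \<ge> 1\<close> by blast
qed

section \<open>The lazy Markov environment\<close>

lemma stationary_chain_lazy:
  assumes "finite \<Sigma>" and Q: "stochastic_matrix \<Sigma> Q" and \<mu>: "invariant_distribution \<Sigma> Q \<mu>"
    and "0 \<le> t" "t \<le> 1"
  shows "stationary_chain \<Sigma> \<mu> (\<lambda>x y. (if x = y then 1 else 0) + t * (Q x y - (if x = y then 1 else 0)))"
proof unfold_locales
  fix x assume "x \<in> \<Sigma>"
  then show "(\<Sum>y\<in>\<Sigma>. (if x = y then 1 else 0) + t * (Q x y - (if x = y then 1 else 0))) = 1"
    using Q \<open>finite \<Sigma>\<close> unfolding stochastic_matrix_def
    by (simp add: sum.distrib sum_distrib_left[symmetric] sum_subtractf)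
next
  fix y assume "y \<in> \<Sigma>"
  have "\<mu> x * ((if x = y then 1 else 0) + t * (Q x y - (if x = y then 1 else 0))) =
      (1 - t) * (\<mu> x * (if x = y then 1 else 0)) + t * (\<mu> x * Q x y)" for x
    by (simp add: algebra_simps)
  then have "(\<Sum>x\<in>\<Sigma>. \<mu> x * ((if x = y then 1 else 0) + t * (Q x y - (if x = y then 1 else 0)))) =
      (1 - t) * (\<Sum>x\<in>\<Sigma>. \<mu> x * (if x = y then 1 else 0)) + t * (\<Sum>x\<in>\<Sigma>. \<mu> x * Q x y)"
    by (simp add: sum.distrib sum_distrib_left)
  also have "\<dots> = \<mu> y"
    using \<open>y \<in> \<Sigma>\<close> \<mu> \<open>finite \<Sigma>\<close> unfolding invariant_distribution_def
    by (simp add: if_distrib algebra_simps cong: if_cong)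
  finally show "(\<Sum>x\<in>\<Sigma>. \<mu> x * ((if x = y then 1 else 0) + t * (Q x y - (if x = y then 1 else 0)))) = \<mu> y" .
next
  fix x y assume "x \<in> \<Sigma>" "y \<in> \<Sigma>"
  then have "Q x y \<ge> 0" using Q unfolding stochastic_matrix_def by auto
  then have "0 \<le> t * Q x y" using \<open>0 \<le> t\<close> by simp
  then show "(if x = y then 1 else 0) + t * (Q x y - (if x = y then 1 else 0)) \<ge> 0"
    using \<open>t \<le> 1\<close> by (cases "x = y") (simp_all add: algebra_simps)
qed (use assms in \<open>auto simp: invariant_distribution_def\<close>)

locale pinning_model = renewal_kernel K for K :: "nat \<Rightarrow> real" +
  fixes \<Sigma> :: "real set" and Q :: "real \<Rightarrow> real \<Rightarrow> real" and \<mu> :: "real \<Rightarrow> real"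
    and \<gamma> \<beta> h :: real
  assumes K_0: "K 0 = 0" and K_sums: "K sums 1" and hom_F_nonneg: "\<And>c. hom_F K c \<ge> 0"
    and finite_states: "finite \<Sigma>" and stochastic: "stochastic_matrix \<Sigma> Q"
    and invariant: "invariant_distribution \<Sigma> Q \<mu>" and \<gamma>_pos: "0 < \<gamma>"
begin

definition resample_rate :: "nat \<Rightarrow> real" where "resample_rate N = real N powr (-\<gamma>)"

definition potential_change :: "real \<Rightarrow> real \<Rightarrow> real" where
  "potential_change x y = (if \<beta> * x + h = \<beta> * y + h then 0 else 1)"

definition potential_bound :: real where "potential_bound = \<bar>h\<bar> + \<bar>\<beta>\<bar> * (\<Sum>x\<in>\<Sigma>. \<bar>x\<bar>)"

definition site_cost :: real where "site_cost = \<bar>ln (K 1)\<bar> + potential_bound"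

definition mean_free_energy :: "nat \<Rightarrow> real" where
  "mean_free_energy N = markov_expect \<Sigma> \<mu> (QN Q \<gamma> N) N (\<lambda>\<omega>. ln (Zpart K \<beta> h \<omega> N) / real N)"

definition limit_free_energy :: real where
  "limit_free_energy = (\<Sum>x\<in>\<Sigma>. \<mu> x * hom_F K (h + \<beta> * x))"

lemma resample_rate_pos: "N \<ge> 1 \<Longrightarrow> resample_rate N > 0"
  unfolding resample_rate_def by simp

lemma resample_rate_tendsto_0: "resample_rate \<longlonglongrightarrow> 0"
  unfolding resample_rate_def using \<gamma>_pos by (intro tendsto_neg_powr filterlim_real_sequentially) auto

lemma resample_rate_le_1: "N \<ge> 1 \<Longrightarrow> resample_rate N \<le> 1"
  unfolding resample_rate_def using \<gamma>_pos by (simp add: powr_minus divide_simps ge_one_powr_ge_zero)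

lemma stationary_chain_QN:
  assumes "N \<ge> 1"
  shows "stationary_chain \<Sigma> \<mu> (QN Q \<gamma> N)"
  using stationary_chain_lazy[OF finite_states stochastic invariant
      less_imp_le[OF resample_rate_pos[OF assms]] resample_rate_le_1[OF assms]]
  unfolding QN_def[abs_def] resample_rate_def .

lemma expect_potential_change_le:
  assumes "N \<ge> 1" and "Suc j \<le> N"
  shows "markov_expect \<Sigma> \<mu> (QN Q \<gamma> N) N (\<lambda>w. potential_change (w j) (w (Suc j))) \<le> resample_rate N"
proof -
  interpret stationary_chain \<Sigma> \<mu> "QN Q \<gamma> N" by (rule stationary_chain_QN[OF \<open>N \<ge> 1\<close>])
  have pointwise: "QN Q \<gamma> N x y * potential_change x y \<le> resample_rate N * Q x y"
    if "x \<in> \<Sigma>" "y \<in> \<Sigma>" for x y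
  proof -
    have "Q x y \<ge> 0" using that stochastic by (simp add: stochastic_matrix_def)
    then show ?thesis using resample_rate_pos[OF \<open>N \<ge> 1\<close>]
      by (auto simp: potential_change_def QN_def resample_rate_def)
  qed
  have "E N (\<lambda>w. potential_change (w j) (w (Suc j))) \<le> (\<Sum>x\<in>\<Sigma>. \<mu> x * (\<Sum>y\<in>\<Sigma>. resample_rate N * Q x y))"
    unfolding expect_transition[OF \<open>Suc j \<le> N\<close>]
    by (intro sum_mono mult_left_mono mu_nonneg) (auto simp: pointwise)
  also have "\<dots> = resample_rate N"
    using stochastic mu_sum_1 unfolding stochastic_matrix_def
    by (simp add: sum_distrib_left[symmetric] sum_distrib_right[symmetric])
  finally show ?thesis .
qed

lemma potential_bound: "x \<in> \<Sigma> \<Longrightarrow> \<bar>\<beta> * x + h\<bar> \<le> potential_bound"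
proof -
  assume "x \<in> \<Sigma>"
  then have "\<bar>x\<bar> \<le> (\<Sum>x\<in>\<Sigma>. \<bar>x\<bar>)" using finite_states by (intro member_le_sum) auto
  then have "\<bar>\<beta> * x\<bar> \<le> \<bar>\<beta>\<bar> * (\<Sum>x\<in>\<Sigma>. \<bar>x\<bar>)" by (simp add: abs_mult mult_left_mono)
  then show ?thesis unfolding potential_bound_def by linarith
qed

lemma potential_bound_nonneg: "potential_bound \<ge> 0"
  unfolding potential_bound_def by (simp add: sum_nonneg)

lemma step_changes_potential:
  "step_changes (\<lambda>n. \<beta> * w n + h) A = (\<Sum>j\<in>A. potential_change (w j) (w (Suc j)))"
  unfolding step_changes_def potential_change_def ..

lemma PiE_atLeastAtMost_in: "w \<in> PiE {0..N} (\<lambda>_. \<Sigma>) \<Longrightarrow> (n::nat) \<le> N \<Longrightarrow> w n \<in> \<Sigma>"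
  by (auto simp: PiE_def Pi_def)

section \<open>Averaged bounds\<close>

lemma ln_Zpart_le:
  assumes "w \<in> PiE {0..N} (\<lambda>_. \<Sigma>)"
  shows "ln (Zpart K \<beta> h w N) \<le> (\<Sum>n\<in>{1..N}. hom_F K (\<beta> * w n + h)) +
    exp potential_bound *
      (\<Sum>n\<in>{1..N}. (\<Sum>j\<in>{n-D..<n}. potential_change (w j) (w (Suc j))) + kernel_tail K D)"
  unfolding Zpart_eq_renewal_pf step_changes_potential[symmetric]
  by (rule ln_renewal_pf_le[OF hom_F_nonneg])
    (use potential_bound PiE_atLeastAtMost_in[OF assms] in auto)

lemma mean_free_energy_le:
  assumes "N \<ge> 1"
  shows "mean_free_energy N \<le>
    limit_free_energy + exp potential_bound * (real D * resample_rate N + kernel_tail K D)"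
proof -
  interpret stationary_chain \<Sigma> \<mu> "QN Q \<gamma> N" by (rule stationary_chain_QN[OF assms])
  have state: "E N (\<lambda>w. hom_F K (\<beta> * w n + h)) = limit_free_energy" if "n \<le> N" for n
    using expect_state[OF that, of "\<lambda>x. hom_F K (\<beta> * x + h)"]
    unfolding limit_free_energy_def by (simp add: add.commute)
  have changes: "(\<Sum>j\<in>{n-D..<n}. E N (\<lambda>w. potential_change (w j) (w (Suc j)))) \<le> real D * resample_rate N"
    if "n \<le> N" for n
  proof -
    have "(\<Sum>j\<in>{n-D..<n}. E N (\<lambda>w. potential_change (w j) (w (Suc j)))) \<le>
        real (card {n-D..<n}) * resample_rate N"
      using that by (intro sum_bounded_above expect_potential_change_le[OF assms]) auto
    also have "\<dots> \<le> real D * resample_rate N"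
      using resample_rate_pos[OF assms] by (intro mult_right_mono) auto
    finally show ?thesis .
  qed
  have "E N (\<lambda>w. ln (Zpart K \<beta> h w N)) \<le> E N (\<lambda>w. (\<Sum>n\<in>{1..N}. hom_F K (\<beta> * w n + h)) +
      exp potential_bound *
        (\<Sum>n\<in>{1..N}. (\<Sum>j\<in>{n-D..<n}. potential_change (w j) (w (Suc j))) + kernel_tail K D))"
    by (intro expect_mono ln_Zpart_le)
  also have "\<dots> = (\<Sum>n\<in>{1..N}. E N (\<lambda>w. hom_F K (\<beta> * w n + h))) + exp potential_bound *
      (\<Sum>n\<in>{1..N}. (\<Sum>j\<in>{n-D..<n}. E N (\<lambda>w. potential_change (w j) (w (Suc j)))) + kernel_tail K D)"
    by (simp add: markov_expect_add markov_expect_cmult markov_expect_sum expect_const)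
  also have "\<dots> \<le> (\<Sum>n\<in>{1..N}. limit_free_energy) +
      exp potential_bound * (\<Sum>n\<in>{1..N}. real D * resample_rate N + kernel_tail K D)"
    using state changes by (intro add_mono mult_left_mono sum_mono) auto
  also have "\<dots> = real N * (limit_free_energy + exp potential_bound * (real D * resample_rate N + kernel_tail K D))"
    by (simp add: algebra_simps)
  finally show ?thesis
    using assms unfolding mean_free_energy_def markov_expect_divide by (simp add: divide_le_eq mult.commute)
qed

definition ln_hom_block :: "nat \<Rightarrow> real \<Rightarrow> real" where
  "ln_hom_block l x = ln (hom_pf K (\<beta> * x + h) l)"

definition mean_ln_hom_block :: "nat \<Rightarrow> real" where
  "mean_ln_hom_block l = (\<Sum>x\<in>\<Sigma>. \<mu> x * ln_hom_block l x)"

definition ln_hom_block_bound :: "nat \<Rightarrow> real" where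
  "ln_hom_block_bound l = (\<Sum>x\<in>\<Sigma>. \<bar>ln_hom_block l x\<bar>)"

lemma ln_hom_block_le_bound: "x \<in> \<Sigma> \<Longrightarrow> ln_hom_block l x \<le> ln_hom_block_bound l"
  unfolding ln_hom_block_bound_def using finite_states
  by (smt (verit) member_le_sum abs_ge_zero abs_ge_self)

lemma ln_hom_block_bound_nonneg: "ln_hom_block_bound l \<ge> 0"
  unfolding ln_hom_block_bound_def by (simp add: sum_nonneg)

lemma ln_Zpart_ge:
  assumes "l \<ge> 1" and "w \<in> PiE {0..N} (\<lambda>_. \<Sigma>)"
  shows "ln (Zpart K \<beta> h w N) \<ge> (\<Sum>b<N div l. ln_hom_block l (w (b*l+1))
      - (ln_hom_block_bound l + l * site_cost) *
          (\<Sum>i\<in>{b*l+1..<b*l+l}. potential_change (w i) (w (Suc i)))) - l * site_cost"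
  unfolding Zpart_eq_renewal_pf step_changes_potential[symmetric] ln_hom_block_def site_cost_def
  by (rule ln_renewal_pf_ge_blocks[OF \<open>l \<ge> 1\<close>])
    (use potential_bound potential_bound_nonneg ln_hom_block_le_bound PiE_atLeastAtMost_in[OF assms(2)]
      in \<open>auto simp: ln_hom_block_def\<close>)

lemma expect_ln_Zpart_ge:
  assumes "N \<ge> 1" and "l \<ge> 1"
  shows "markov_expect \<Sigma> \<mu> (QN Q \<gamma> N) N (\<lambda>w. ln (Zpart K \<beta> h w N)) \<ge>
    real (N div l) * mean_ln_hom_block l - N * ((ln_hom_block_bound l + l * site_cost) * resample_rate N)
    - l * site_cost"
proof -
  interpret stationary_chain \<Sigma> \<mu> "QN Q \<gamma> N" by (rule stationary_chain_QN[OF assms(1)])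
  let ?q = "N div l" and ?B = "ln_hom_block_bound l + l * site_cost"
  have "?B \<ge> 0" using ln_hom_block_bound_nonneg potential_bound_nonneg unfolding site_cost_def by simp
  have block: "mean_ln_hom_block l - ?B * (l * resample_rate N) \<le> E N (\<lambda>w. ln_hom_block l (w (b*l+1)))
      - ?B * (\<Sum>i\<in>{b*l+1..<b*l+l}. E N (\<lambda>w. potential_change (w i) (w (Suc i))))" if "b < ?q" for b
  proof -
    have "Suc b * l \<le> ?q * l" using that by (intro mult_right_mono) auto
    then have "b * l + l \<le> N" using order_trans[OF _ div_times_less_eq_dividend[of N l]] by simp
    then have "(\<Sum>i\<in>{b*l+1..<b*l+l}. E N (\<lambda>w. potential_change (w i) (w (Suc i)))) \<le>
        real (card {b*l+1..<b*l+l}) * resample_rate N"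
      by (intro sum_bounded_above expect_potential_change_le[OF assms(1)]) auto
    also have "\<dots> \<le> l * resample_rate N" using resample_rate_pos[OF assms(1)] by (intro mult_right_mono) auto
    finally have "?B * (\<Sum>i\<in>{b*l+1..<b*l+l}. E N (\<lambda>w. potential_change (w i) (w (Suc i)))) \<le>
        ?B * (l * resample_rate N)" using \<open>?B \<ge> 0\<close> by (rule mult_left_mono)
    moreover have "E N (\<lambda>w. ln_hom_block l (w (b*l+1))) = mean_ln_hom_block l"
      unfolding mean_ln_hom_block_def using \<open>b * l + l \<le> N\<close> \<open>l \<ge> 1\<close> by (intro expect_state) auto
    ultimately show ?thesis by linarith
  qed
  have "real ?q * real l \<le> real N" using div_times_less_eq_dividend[of N l] by (metis of_nat_le_iff of_nat_mult)
  then have "real ?q * real l * (?B * resample_rate N) \<le> real N * (?B * resample_rate N)"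
    using \<open>?B \<ge> 0\<close> resample_rate_pos[OF assms(1)] by (intro mult_right_mono) auto
  moreover have "(\<Sum>b<?q. mean_ln_hom_block l - ?B * (l * resample_rate N)) =
      ?q * mean_ln_hom_block l - real ?q * real l * (?B * resample_rate N)"
    by (simp add: algebra_simps)
  ultimately have "?q * mean_ln_hom_block l - N * (?B * resample_rate N) - l * site_cost \<le>
      (\<Sum>b<?q. mean_ln_hom_block l - ?B * (l * resample_rate N)) - l * site_cost"
    by linarith
  also have "\<dots> \<le> (\<Sum>b<?q. E N (\<lambda>w. ln_hom_block l (w (b*l+1)))
      - ?B * (\<Sum>i\<in>{b*l+1..<b*l+l}. E N (\<lambda>w. potential_change (w i) (w (Suc i))))) - l * site_cost"
    using block by (intro diff_right_mono sum_mono) auto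
  also have "\<dots> = E N (\<lambda>w. (\<Sum>b<?q. ln_hom_block l (w (b*l+1))
      - ?B * (\<Sum>i\<in>{b*l+1..<b*l+l}. potential_change (w i) (w (Suc i)))) - l * site_cost)"
    by (simp add: markov_expect_diff markov_expect_cmult markov_expect_sum expect_const)
  also have "\<dots> \<le> E N (\<lambda>w. ln (Zpart K \<beta> h w N))"
    by (intro expect_mono ln_Zpart_ge[OF assms(2)])
  finally show ?thesis .
qed

lemma div_mult_ratio_ge:
  fixes A :: real and N l :: nat
  assumes "N \<ge> 1" and "l \<ge> 1"
  shows "real (N div l) * A / N \<ge> A / l - \<bar>A\<bar> / N"
proof -
  define q where "q = N div l"
  have "real N = real q * l + real (N mod l)" unfolding q_def by (metis div_mult_mod_eq of_nat_add of_nat_mult)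
  moreover have "N mod l < l" using \<open>l \<ge> 1\<close> by simp
  ultimately have d: "\<bar>real q * l - N\<bar> \<le> l" by linarith
  have pos: "real N > 0" "real l > 0" using assms by auto
  have "q * A / N - A / l = A * (real q * l - N) / (N * l)" using pos by (simp add: field_simps)
  also have "\<bar>\<dots>\<bar> = \<bar>A\<bar> * \<bar>real q * l - N\<bar> / (N * l)" using pos by (simp add: abs_mult)
  also have "\<dots> \<le> \<bar>A\<bar> * l / (N * l)" using d pos by (intro divide_right_mono mult_left_mono) auto
  also have "\<dots> = \<bar>A\<bar> / N" using pos by simp
  finally show ?thesis unfolding q_def abs_le_iff by linarith
qed

lemma mean_free_energy_ge:
  assumes "N \<ge> 1" and "l \<ge> 1"
  shows "mean_free_energy N \<ge> mean_ln_hom_block l / l - (\<bar>mean_ln_hom_block l\<bar> + l * site_cost) / N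
    - (ln_hom_block_bound l + l * site_cost) * resample_rate N"
proof -
  let ?A = "mean_ln_hom_block l" and ?B = "ln_hom_block_bound l + l * site_cost"
  have "(real (N div l) * ?A - N * (?B * resample_rate N) - l * site_cost) / N \<le> mean_free_energy N"
    unfolding mean_free_energy_def markov_expect_divide
    by (rule divide_right_mono[OF expect_ln_Zpart_ge[OF assms]]) simp
  moreover have "(real (N div l) * ?A - N * (?B * resample_rate N) - l * site_cost) / N =
      real (N div l) * ?A / N - ?B * resample_rate N - l * site_cost / N"
    using assms(1) by (simp add: field_simps)
  moreover have "(\<bar>?A\<bar> + l * site_cost) / N = \<bar>?A\<bar> / N + l * site_cost / N" by (simp add: add_divide_distrib)
  ultimately show ?thesis using div_mult_ratio_ge[OF assms, of ?A] by linarith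
qed

lemma mean_ln_hom_block_tendsto: "(\<lambda>l. mean_ln_hom_block l / real l) \<longlonglongrightarrow> limit_free_energy"
proof -
  have "(\<lambda>l. \<Sum>x\<in>\<Sigma>. \<mu> x * (ln (hom_pf K (\<beta> * x + h) l) / real l)) \<longlonglongrightarrow>
      (\<Sum>x\<in>\<Sigma>. \<mu> x * hom_F K (\<beta> * x + h))"
    by (intro tendsto_sum tendsto_mult_left ln_hom_pf_tendsto)
  then show ?thesis
    unfolding mean_ln_hom_block_def ln_hom_block_def limit_free_energy_def
    by (simp add: sum_divide_distrib add.commute)
qed

lemma mean_free_energy_eventually_less:
  assumes "limit_free_energy < a"
  shows "eventually (\<lambda>N. mean_free_energy N < a) sequentially"
proof -
  define \<epsilon> where "\<epsilon> = a - limit_free_energy"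
  have "\<epsilon> > 0" using assms unfolding \<epsilon>_def by simp
  have "(\<lambda>D. exp potential_bound * kernel_tail K D) \<longlonglongrightarrow> 0"
    using tendsto_mult_left[OF kernel_tail_tendsto_0[OF K_0 K_sums]] by simp
  from order_tendstoD(2)[OF this, of "\<epsilon>/2"]
  have "eventually (\<lambda>D. exp potential_bound * kernel_tail K D < \<epsilon>/2) sequentially"
    using \<open>\<epsilon> > 0\<close> by simp
  then obtain D where D: "exp potential_bound * kernel_tail K D < \<epsilon>/2"
    by (auto simp: eventually_sequentially)
  have "(\<lambda>N. exp potential_bound * (real D * resample_rate N)) \<longlonglongrightarrow> 0"
    using tendsto_mult_left[OF tendsto_mult_left[OF resample_rate_tendsto_0]] by simp
  from order_tendstoD(2)[OF this, of "\<epsilon>/2"]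
  have "eventually (\<lambda>N. exp potential_bound * (real D * resample_rate N) < \<epsilon>/2) sequentially"
    using \<open>\<epsilon> > 0\<close> by simp
  then show ?thesis
    using eventually_ge_at_top[of 1]
  proof eventually_elim
    case (elim N)
    then show ?case
      using mean_free_energy_le[OF elim(2), of D] elim(1) D unfolding \<epsilon>_def by (simp add: algebra_simps)
  qed
qed

lemma mean_free_energy_eventually_greater:
  assumes "a < limit_free_energy"
  shows "eventually (\<lambda>N. a < mean_free_energy N) sequentially"
proof -
  define \<epsilon> where "\<epsilon> = limit_free_energy - a"
  have "\<epsilon> > 0" using assms unfolding \<epsilon>_def by simp
  have "eventually (\<lambda>l. limit_free_energy - \<epsilon>/2 < mean_ln_hom_block l / real l \<and> l \<ge> 1) sequentially"
    using order_tendstoD(1)[OF mean_ln_hom_block_tendsto] \<open>\<epsilon> > 0\<close> eventually_ge_at_top[of 1]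
    by (auto intro: eventually_conj)
  then obtain l where l: "limit_free_energy - \<epsilon>/2 < mean_ln_hom_block l / real l" "l \<ge> 1"
    by (auto simp: eventually_sequentially)
  let ?err = "\<lambda>N. (\<bar>mean_ln_hom_block l\<bar> + l * site_cost) / real N +
    (ln_hom_block_bound l + l * site_cost) * resample_rate N"
  have "?err \<longlonglongrightarrow> 0 + (ln_hom_block_bound l + l * site_cost) * 0"
    by (intro tendsto_add tendsto_mult_left resample_rate_tendsto_0 tendsto_divide_0[OF tendsto_const]
        filterlim_at_top_imp_at_infinity filterlim_real_sequentially)
  from order_tendstoD(2)[OF this, of "\<epsilon>/2"]
  have "eventually (\<lambda>N. ?err N < \<epsilon>/2) sequentially" using \<open>\<epsilon> > 0\<close> by simp
  then show ?thesis
    using eventually_ge_at_top[of 1]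
  proof eventually_elim
    case (elim N)
    have "mean_free_energy N \<ge> mean_ln_hom_block l / real l - ?err N"
      using mean_free_energy_ge[OF elim(2) l(2)] by simp
    then show ?case using elim(1) l(1) unfolding \<epsilon>_def by argo
  qed
qed

lemma mean_free_energy_tendsto: "mean_free_energy \<longlonglongrightarrow> limit_free_energy"
  by (rule order_tendstoI) (auto intro: mean_free_energy_eventually_less mean_free_energy_eventually_greater)

end

theorem mainTheorem6:
  fixes K :: "nat \<Rightarrow> real" and L :: "real \<Rightarrow> real" and \<alpha> :: real
    and \<Sigma> :: "real set" and Q :: "real \<Rightarrow> real \<Rightarrow> real" and \<mu> :: "real \<Rightarrow> real"
    and \<gamma> \<beta> h :: real
  assumes "\<alpha> \<ge> 0" and "slowly_varying L"
    and "K 0 = 0" and "\<And>n. n \<ge> 1 \<Longrightarrow> K n = L (real n) * real n powr (-(1 + \<alpha>))"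
    and "K sums 1"
    and "finite \<Sigma>" and "\<Sigma> \<noteq> {}"
    and "stochastic_matrix \<Sigma> Q" and "irreducible_matrix \<Sigma> Q"
    and "invariant_distribution \<Sigma> Q \<mu>"
    and "0 < \<gamma>" and "\<gamma> < 1" and "\<beta> \<ge> 0"
  shows "(\<lambda>N. markov_expect \<Sigma> \<mu> (QN Q \<gamma> N) N (\<lambda>\<omega>. ln (Zpart K \<beta> h \<omega> N) / real N))
           \<longlonglongrightarrow> (\<Sum>x\<in>\<Sigma>. \<mu> x * hom_F K (h + \<beta> * x))"
proof -
  have L_pos: "L x > 0" if "x > 0" for x using \<open>slowly_varying L\<close> that by (simp add: slowly_varying_def)
  have K_nonneg: "K n \<ge> 0" for n
    using assms(3) assms(4)[of n] L_pos[of "real n"] by (cases "n = 0") auto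
  interpret renewal_kernel K
    using K_nonneg partial_sum_le_1_if_sums_1[OF K_nonneg \<open>K sums 1\<close>] assms(4)[of 1] L_pos[of 1]
    by unfold_locales auto
  have "hom_F K c \<ge> 0" for c
    using hom_F_nonneg_if_subexponential kernel_subexponential[OF assms(2,4)] by blast
  interpret pinning_model K \<Sigma> Q \<mu> \<gamma> \<beta> h
    using \<open>\<And>c. hom_F K c \<ge> 0\<close> assms by unfold_locales auto
  show ?thesis
    using mean_free_energy_tendsto unfolding mean_free_energy_def[abs_def] limit_free_energy_def .
qed

end
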